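(* Let $k\ge1$ be an integer and let $\mathbf{x}\in A^{\mathbb{N}}$ be a sequence such that its length-$k$ sliding-block code $B_k(\mathbf{x})$ is automatic in some regular numeration system $\mathcal{N}_k$. If the Parikh vectors of the length-$n$ prefixes of $B_k(\mathbf{x})$ form an $\mathcal{N}_k$-synchronized sequence, then $(\rho^k_{\mathbf{x}}(n))_{n\ge0}$ is $\mathcal{N}_k$-regular.
   Context: $u\sim_k v$ if $|u|_w=|v|_w$ for all words $w$ of length at most $k$; $\rho^k_{\mathbf{x}}(n)$ is the number of $\sim_k$-classes of length-$n$ factors of $\mathbf{x}$. $B_k(\mathbf{x})$: the sequence whose $i$-th letter codes (injectively) the factor $x_i\cdots x_{i+k-1}$ of $\mathbf{x}=x_0x_1\cdots$, over an alphabet in bijection with the length-$k$ factors of $\mathbf{x}$. An abstract numeration system with zeros $\mathcal{N}=(L,D,<,0)$: $D$ finite totally ordered with least digit $0$, $L\subseteq D^*$ infinite, containing the empty word, $w\in L\Leftrightarrow 0w\in L$; $\mathrm{rep}(n)$ is the $n$-th word of $L\setminus0^+L$ in radix order; $\mathrm{val}$ gives $n$ to all words of $0^*\mathrm{rep}(n)$. It is regular if $L$ and the addition relation $\{\langle x,y,z\rangle:\mathrm{val}(x)+\mathrm{val}(y)=\mathrm{val}(z)\}$ (words read synchronously, same length) are regular languages. A sequence is automatic if a DFA with output outputs its $n$-th term on valid representations of $n$. $s\colon\mathbb{N}\to\mathbb{N}^m$ is synchronized if $\{\langle x,y_1,\dots,y_m\rangle: s(\mathrm{val}(x))=(\mathrm{val}(y_1),\dots,\mathrm{val}(y_m))\}$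 is regular. A sequence $f$ is regular if $f(n)=\lambda\mu(\mathrm{rep}(n))\gamma$ for a row vector $\lambda$, column vector $\gamma$ and matrix-valued morphism $\mu$. *)

theory Defs
  imports Main
begin

definition regular_lang :: "'b list set \<Rightarrow> bool" where
  "regular_lang Lg \<longleftrightarrow>
     (\<exists>(Q::nat set) q0 (\<delta>::nat \<Rightarrow> 'b \<Rightarrow> nat) F.
        finite Q \<and> q0 \<in> Q \<and> (\<forall>q\<in>Q. \<forall>a. \<delta> q a \<in> Q) \<and> F \<subseteq> Q \<and>
        Lg = {w. foldl \<delta> q0 w \<in> F})"

text \<open>Digits are natural numbers with their usual order; the digit 0 is the least digit.\<close>

definition radix_less :: "nat list \<Rightarrow> nat list \<Rightarrow> bool" where
  "radix_less u v \<longleftrightarrow> length u < length v \<or>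
     (length u = length v \<and> (u, v) \<in> lexord {(a, b). a < b})"

definition valid_words :: "nat list set \<Rightarrow> nat list set" where
  "valid_words L = {w \<in> L. w = [] \<or> hd w \<noteq> 0}"

definition ans :: "nat list set \<Rightarrow> nat set \<Rightarrow> bool" where
  "ans L D \<longleftrightarrow> finite D \<and> 0 \<in> D \<and> L \<subseteq> lists D \<and> infinite L \<and> [] \<in> L \<and>
     (\<forall>w. w \<in> L \<longleftrightarrow> 0 # w \<in> L) \<and> infinite (valid_words L)"

definition rep :: "nat list set \<Rightarrow> nat \<Rightarrow> nat list" where
  "rep L n = (THE w. w \<in> valid_words L \<and> card {v \<in> valid_words L. radix_less v w} = n)"

definition val :: "nat list set \<Rightarrow> nat list \<Rightarrow> nat" where
  "val L w = (THE n. \<exists>j. w = replicate j 0 @ rep L n)"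

definition add_rel :: "nat list set \<Rightarrow> (nat \<times> nat \<times> nat) list set" where
  "add_rel L = {zip x (zip y z) | x y z. x \<in> L \<and> y \<in> L \<and> z \<in> L \<and>
      length x = length y \<and> length y = length z \<and> val L x + val L y = val L z}"

definition regular_ns :: "nat list set \<Rightarrow> nat set \<Rightarrow> bool" where
  "regular_ns L D \<longleftrightarrow> ans L D \<and> regular_lang L \<and> regular_lang (add_rel L)"

definition automatic :: "nat list set \<Rightarrow> (nat \<Rightarrow> 'c) \<Rightarrow> bool" where
  "automatic L f \<longleftrightarrow>
     (\<exists>(Q::nat set) q0 (\<delta>::nat \<Rightarrow> nat \<Rightarrow> nat) (\<tau>::nat \<Rightarrow> 'c).
        finite Q \<and> q0 \<in> Q \<and> (\<forall>q\<in>Q. \<forall>a. \<delta> q a \<in> Q) \<and>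
        (\<forall>w\<in>L. f (val L w) = \<tau> (foldl \<delta> q0 w)))"

definition conv :: "nat list \<Rightarrow> nat list list \<Rightarrow> (nat \<times> nat list) list" where
  "conv x ys = map (\<lambda>i. (x ! i, map (\<lambda>y. y ! i) ys)) [0..<length x]"

definition synchronized :: "nat list set \<Rightarrow> nat \<Rightarrow> (nat \<Rightarrow> nat list) \<Rightarrow> bool" where
  "synchronized L m s \<longleftrightarrow> (\<forall>n. length (s n) = m) \<and>
     regular_lang {conv x ys | x ys. x \<in> L \<and> length ys = m \<and>
        (\<forall>y\<in>set ys. y \<in> L \<and> length y = length x) \<and>
        s (val L x) = map (val L) ys}"

definition mmul :: "nat \<Rightarrow> (nat \<Rightarrow> nat \<Rightarrow> int) \<Rightarrow> (nat \<Rightarrow> nat \<Rightarrow> int) \<Rightarrow> (nat \<Rightarrow> nat \<Rightarrow> int)" where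
  "mmul r A B = (\<lambda>i j. \<Sum>l<r. A i l * B l j)"

definition mword :: "nat \<Rightarrow> (nat \<Rightarrow> nat \<Rightarrow> nat \<Rightarrow> int) \<Rightarrow> nat list \<Rightarrow> (nat \<Rightarrow> nat \<Rightarrow> int)" where
  "mword r \<mu> w = foldr (\<lambda>a M. mmul r (\<mu> a) M) w (\<lambda>i j. if i = j then 1 else 0)"

definition regular_seq :: "nat list set \<Rightarrow> (nat \<Rightarrow> nat) \<Rightarrow> bool" where
  "regular_seq L f \<longleftrightarrow>
     (\<exists>r (lv::nat \<Rightarrow> int) \<mu> (\<gamma>::nat \<Rightarrow> int). \<forall>n.
        int (f n) = (\<Sum>i<r. \<Sum>j<r. lv i * mword r \<mu> (rep L n) i j * \<gamma> j))"

definition occ :: "'a list \<Rightarrow> 'a list \<Rightarrow> nat" where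
  "occ u w = card {i. i + length w \<le> length u \<and> take (length w) (drop i u) = w}"

definition kab_equiv :: "nat \<Rightarrow> 'a list \<Rightarrow> 'a list \<Rightarrow> bool" where
  "kab_equiv k u v \<longleftrightarrow> (\<forall>w. length w \<le> k \<longrightarrow> occ u w = occ v w)"

definition factor :: "(nat \<Rightarrow> 'a) \<Rightarrow> nat \<Rightarrow> nat \<Rightarrow> 'a list" where
  "factor x i n = map x [i..<i + n]"

definition factors :: "(nat \<Rightarrow> 'a) \<Rightarrow> nat \<Rightarrow> 'a list set" where
  "factors x n = {factor x i n | i. True}"

definition kab_complexity :: "nat \<Rightarrow> (nat \<Rightarrow> 'a) \<Rightarrow> nat \<Rightarrow> nat" where
  "kab_complexity k x n =
     card ((\<lambda>u. {v \<in> factors x n. kab_equiv k u v}) ` factors x n)"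

text \<open>Sliding block code: the i-th letter is the factor x_i ... x_{i+k-1} itself
  (an injective coding over the alphabet of length-k factors).\<close>
definition block_code :: "nat \<Rightarrow> (nat \<Rightarrow> 'a) \<Rightarrow> nat \<Rightarrow> 'a list" where
  "block_code k x i = factor x i k"

definition prefix_count :: "(nat \<Rightarrow> 'b) \<Rightarrow> 'b \<Rightarrow> nat \<Rightarrow> nat" where
  "prefix_count y b n = card {i. i < n \<and> y i = b}"

end

theory Submission
  imports Defs
begin

text \<open>Two length-\<open>n\<close> factors are \<open>k\<close>-abelian equivalent iff they share their prefix of length
  \<open>k - 1\<close> and contain every length-\<open>k\<close> factor equally often. The prefix is read off the automatic
  sequence \<open>B\<^sub>k(x)\<close>, and the number of occurrences of a block \<open>w\<close> in the factor at \<open>i\<close> is the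
  increment of the synchronized prefix count of the letter \<open>w\<close> of \<open>B\<^sub>k(x)\<close> between \<open>i\<close> and
  \<open>i + n - k + 1\<close>. Hence the set of pairs \<open>(n, i)\<close> such that the factor at \<open>i\<close> is not equivalent to
  any earlier one is defined by a first-order formula over addition, the automatic sequence and
  the synchronized sequence, and is therefore recognized by an automaton reading representations
  in parallel. For fixed \<open>n\<close> these \<open>i\<close> are one per class, so \<open>\<rho>\<^sup>k\<^sub>x(n)\<close> counts the second
  tracks accepted alongside a (suitably zero-padded) representation of \<open>n\<close>; such a count is a
  product of transition-count matrices along \<open>rep n\<close>, i.e. a linear representation.\<close>

section \<open>Abstract numeration systems\<close>

lemma radix_less_irrefl: "\<not> radix_less w w"
  unfolding radix_less_def using lexord_irreflexive[of "{(a, b). a < (b::nat)}" w] by auto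

lemma radix_less_trans: "radix_less u v \<Longrightarrow> radix_less v w \<Longrightarrow> radix_less u w"
  unfolding radix_less_def by (auto elim: lexord_trans simp: trans_def)

lemma radix_less_linear: "u \<noteq> v \<Longrightarrow> radix_less u v \<or> radix_less v u"
proof -
  assume "u \<noteq> v"
  have "(u, v) \<in> lexord {(a, b). a < (b::nat)} \<or> u = v \<or> (v, u) \<in> lexord {(a, b). a < (b::nat)}"
    by (rule lexord_linear) auto
  then show ?thesis using \<open>u \<noteq> v\<close> unfolding radix_less_def
    by (cases "length u" "length v" rule: linorder_cases) auto
qed

lemma zeros_append_eq_imp_eq:
  assumes "replicate j 0 @ v = replicate j' 0 @ v'"
    and "v = [] \<or> hd v \<noteq> 0" and "v' = [] \<or> hd v' \<noteq> (0::nat)"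
  shows "v = v'"
  using assms
proof (induction j arbitrary: j')
  case 0
  then show ?case by (cases j') auto
next
  case (Suc j)
  then show ?case by (cases j') auto
qed

definition radix_rank :: "nat list set \<Rightarrow> nat list \<Rightarrow> nat" where
  "radix_rank L w = card {v \<in> valid_words L. radix_less v w}"

locale numeration_system =
  fixes L :: "nat list set" and D :: "nat set"
  assumes ans: "ans L D"
begin

lemma finite_digits: "finite D"
  using ans unfolding ans_def by auto

lemma set_subset_digits: "w \<in> L \<Longrightarrow> set w \<subseteq> D"
  using ans unfolding ans_def by auto

lemma zeros_append_in_lang_iff [simp]: "replicate j 0 @ w \<in> L \<longleftrightarrow> w \<in> L"
  using ans unfolding ans_def by (induction j) auto

lemma finite_radix_smaller: "finite {v \<in> valid_words L. radix_less v w}"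
proof (rule finite_subset)
  show "{v \<in> valid_words L. radix_less v w} \<subseteq> {xs. set xs \<subseteq> D \<and> length xs \<le> length w}"
    using set_subset_digits unfolding valid_words_def radix_less_def by auto
  show "finite {xs. set xs \<subseteq> D \<and> length xs \<le> length w}"
    using finite_digits by (rule finite_lists_length_le)
qed

lemma radix_rank_less: "v \<in> valid_words L \<Longrightarrow> radix_less v w \<Longrightarrow> radix_rank L v < radix_rank L w"
  unfolding radix_rank_def
  by (rule psubset_card_mono[OF finite_radix_smaller]) (use radix_less_trans radix_less_irrefl in blast)

lemma inj_on_radix_rank: "inj_on (radix_rank L) (valid_words L)"
  by (metis (no_types, lifting) inj_onI less_irrefl radix_rank_less radix_less_linear)

text \<open>Since there are infinitely many valid words, the ranks below any large rank fill an initial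
  segment of \<open>\<nat>\<close>.\<close>
lemma radix_rank_surj: "\<exists>w \<in> valid_words L. radix_rank L w = n"
proof -
  have "infinite (radix_rank L ` valid_words L)"
    using ans inj_on_radix_rank finite_image_iff unfolding ans_def by blast
  then obtain w where w: "w \<in> valid_words L" "radix_rank L w > n"
    unfolding finite_nat_set_iff_bounded_le by (auto simp: not_le)
  let ?P = "{v \<in> valid_words L. radix_less v w}"
  have "radix_rank L ` ?P \<subseteq> {..<radix_rank L w}"
    using radix_rank_less by auto
  moreover have "card (radix_rank L ` ?P) = radix_rank L w"
    unfolding radix_rank_def[of L w]
    by (rule card_image, rule inj_on_subset[OF inj_on_radix_rank]) auto
  ultimately have "radix_rank L ` ?P = {..<radix_rank L w}"
    by (simp add: card_subset_eq)
  then have "n \<in> radix_rank L ` ?P" using w by simp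
  then show ?thesis by blast
qed

lemma rep_valid_rank: "rep L n \<in> valid_words L \<and> radix_rank L (rep L n) = n"
proof -
  have "\<exists>!w. w \<in> valid_words L \<and> radix_rank L w = n"
    using radix_rank_surj inj_on_radix_rank unfolding inj_on_def by blast
  then show ?thesis unfolding rep_def radix_rank_def[symmetric] by (rule theI')
qed

lemma rep_in_lang: "rep L n \<in> L"
  using rep_valid_rank unfolding valid_words_def by auto

lemma rep_radix_rank: "w \<in> valid_words L \<Longrightarrow> rep L (radix_rank L w) = w"
  by (meson inj_on_eq_iff inj_on_radix_rank rep_valid_rank)

lemma lang_obtain_valid_suffix:
  assumes "w \<in> L"
  obtains j v where "w = replicate j 0 @ v" "v \<in> valid_words L"
proof -
  have "\<exists>j v. w = replicate j 0 @ v \<and> v \<in> valid_words L"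
    using assms
  proof (induction w)
    case Nil
    then show ?case unfolding valid_words_def by (intro exI[of _ 0] exI[of _ "[]"]) auto
  next
    case (Cons a w)
    show ?case
    proof (cases "a = 0")
      case True
      then have "w \<in> L" using Cons.prems ans unfolding ans_def by auto
      then obtain j v where "w = replicate j 0 @ v \<and> v \<in> valid_words L" using Cons.IH by auto
      then show ?thesis using True by (intro exI[of _ "Suc j"] exI[of _ v]) auto
    next
      case False
      then show ?thesis using Cons.prems unfolding valid_words_def
        by (intro exI[of _ 0] exI[of _ "a # w"]) auto
    qed
  qed
  then show ?thesis using that by blast
qed

lemma val_zeros_append_valid: "v \<in> valid_words L \<Longrightarrow> val L (replicate j 0 @ v) = radix_rank L v"
  unfolding val_def
proof (rule the_equality)
  assume v: "v \<in> valid_words L"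
  show "\<exists>j'. replicate j 0 @ v = replicate j' 0 @ rep L (radix_rank L v)"
    using rep_radix_rank[OF v] by auto
  fix n assume "\<exists>j'. replicate j 0 @ v = replicate j' 0 @ rep L n"
  then obtain j' where "replicate j 0 @ v = replicate j' 0 @ rep L n" by auto
  then have "v = rep L n"
    by (rule zeros_append_eq_imp_eq) (use v rep_valid_rank[of n] in \<open>auto simp: valid_words_def\<close>)
  then show "n = radix_rank L v" using rep_valid_rank by auto
qed

lemma val_zeros_append_rep [simp]: "val L (replicate j 0 @ rep L n) = n"
  using val_zeros_append_valid rep_valid_rank by auto

lemma val_rep [simp]: "val L (rep L n) = n"
  using val_zeros_append_rep[of 0] by simp

lemma val_zeros_append [simp]: "w \<in> L \<Longrightarrow> val L (replicate j 0 @ w) = val L w"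
  by (metis append_assoc lang_obtain_valid_suffix replicate_add val_zeros_append_valid)

lemma lang_eq_zeros_append_rep: "w \<in> L \<Longrightarrow> \<exists>j. w = replicate j 0 @ rep L (val L w)"
  by (metis lang_obtain_valid_suffix rep_radix_rank val_zeros_append_valid)

lemma same_length_val_eq_imp_eq:
  assumes "u \<in> L" "v \<in> L" "length u = length v" "val L u = val L v"
  shows "u = v"
proof -
  obtain j j' where "u = replicate j 0 @ rep L (val L u)" "v = replicate j' 0 @ rep L (val L v)"
    using lang_eq_zeros_append_rep assms(1,2) by blast
  then show ?thesis using assms(3,4) by (metis add_right_cancel length_append length_replicate)
qed

end

section \<open>Regular languages\<close>

lemma foldl_in_states: "q \<in> Q \<Longrightarrow> \<forall>q\<in>Q. \<forall>a. \<delta> q a \<in> Q \<Longrightarrow> foldl \<delta> q w \<in> Q"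
  by (induction w arbitrary: q) auto

text \<open>The states of a DFA may be taken from any type; they are renumbered into \<open>\<nat>\<close>.\<close>
lemma regular_langI:
  fixes Q :: "'s set" and \<delta> :: "'s \<Rightarrow> 'b \<Rightarrow> 's"
  assumes fin: "finite Q" and q0: "q0 \<in> Q" and closed: "\<forall>q\<in>Q. \<forall>a. \<delta> q a \<in> Q"
  shows "regular_lang {w. foldl \<delta> q0 w \<in> F}"
proof -
  obtain f :: "'s \<Rightarrow> nat" and n where f: "f ` Q = {i. i < n}" "inj_on f Q"
    using finite_imp_inj_to_nat_seg[OF fin] by blast
  define \<delta>' where "\<delta>' i a = f (\<delta> (inv_into Q f i) a)" for i a
  have run: "foldl \<delta>' (f q) w = f (foldl \<delta> q w)" if "q \<in> Q" for q w
    using that by (induction w arbitrary: q) (simp_all add: \<delta>'_def f(2) closed)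
  have "foldl \<delta> q0 w \<in> F \<longleftrightarrow> foldl \<delta>' (f q0) w \<in> f ` (F \<inter> Q)" for w
    unfolding run[OF q0] using foldl_in_states[OF q0 closed] f(2)
    by (auto simp: inj_on_image_mem_iff)
  moreover have "finite (f ` Q)" "f q0 \<in> f ` Q" "\<forall>q\<in>f ` Q. \<forall>a. \<delta>' q a \<in> f ` Q"
    "f ` (F \<inter> Q) \<subseteq> f ` Q"
    using fin q0 closed f(2) by (auto simp: \<delta>'_def)
  ultimately show ?thesis unfolding regular_lang_def by blast
qed

lemma regular_langE:
  assumes "regular_lang Lg"
  obtains Q q0 \<delta> F where "finite (Q::nat set)" "q0 \<in> Q" "\<forall>q\<in>Q. \<forall>a. \<delta> q a \<in> Q" "F \<subseteq> Q"
    "Lg = {w. foldl \<delta> q0 w \<in> F}"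
  using assms unfolding regular_lang_def by blast

lemma regular_lang_Int:
  assumes "regular_lang L1" "regular_lang L2"
  shows "regular_lang (L1 \<inter> L2)"
proof -
  obtain Q1 q1 \<delta>1 F1 where A: "finite (Q1::nat set)" "q1 \<in> Q1" "\<forall>q\<in>Q1. \<forall>a. \<delta>1 q a \<in> Q1"
    "L1 = {w. foldl \<delta>1 q1 w \<in> F1}" using regular_langE[OF assms(1)] by metis
  obtain Q2 q2 \<delta>2 F2 where B: "finite (Q2::nat set)" "q2 \<in> Q2" "\<forall>q\<in>Q2. \<forall>a. \<delta>2 q a \<in> Q2"
    "L2 = {w. foldl \<delta>2 q2 w \<in> F2}" using regular_langE[OF assms(2)] by metis
  define \<delta> where "\<delta> pq a = (\<delta>1 (fst pq) a, \<delta>2 (snd pq) a)" for pq a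
  have run: "foldl \<delta> (p, q) w = (foldl \<delta>1 p w, foldl \<delta>2 q w)" for p q w
    by (induction w arbitrary: p q) (auto simp: \<delta>_def)
  have "L1 \<inter> L2 = {w. foldl \<delta> (q1, q2) w \<in> F1 \<times> F2}"
    using A(4) B(4) run by auto
  moreover have "regular_lang {w. foldl \<delta> (q1, q2) w \<in> F1 \<times> F2}"
    by (rule regular_langI[of "Q1 \<times> Q2"]) (use A B in \<open>auto simp: \<delta>_def\<close>)
  ultimately show ?thesis by simp
qed

lemma regular_lang_Compl:
  assumes "regular_lang Lg"
  shows "regular_lang (- Lg)"
proof -
  obtain Q q0 \<delta> F where A: "finite (Q::nat set)" "q0 \<in> Q" "\<forall>q\<in>Q. \<forall>a. \<delta> q a \<in> Q"
    "Lg = {w. foldl \<delta> q0 w \<in> F}" using regular_langE[OF assms] by metis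
  have "- Lg = {w. foldl \<delta> q0 w \<in> - F}" using A(4) by auto
  moreover have "regular_lang {w. foldl \<delta> q0 w \<in> - F}"
    by (rule regular_langI[of Q]) (use A in auto)
  ultimately show ?thesis by simp
qed

lemma regular_lang_Diff: "regular_lang L1 \<Longrightarrow> regular_lang L2 \<Longrightarrow> regular_lang (L1 - L2)"
  using regular_lang_Int[OF _ regular_lang_Compl] by (simp add: Diff_eq)

lemma regular_lang_map_vimage:
  assumes "regular_lang Lg"
  shows "regular_lang {w. map h w \<in> Lg}"
proof -
  obtain Q q0 \<delta> F where A: "finite (Q::nat set)" "q0 \<in> Q" "\<forall>q\<in>Q. \<forall>a. \<delta> q a \<in> Q"
    "Lg = {w. foldl \<delta> q0 w \<in> F}" using regular_langE[OF assms] by metis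
  define \<delta>' where "\<delta>' q a = \<delta> q (h a)" for q a
  have run: "foldl \<delta>' q w = foldl \<delta> q (map h w)" for q w
    by (induction w arbitrary: q) (auto simp: \<delta>'_def)
  have "{w. map h w \<in> Lg} = {w. foldl \<delta>' q0 w \<in> F}" using A(4) run by auto
  moreover have "regular_lang {w. foldl \<delta>' q0 w \<in> F}"
    by (rule regular_langI[of Q]) (use A in \<open>auto simp: \<delta>'_def\<close>)
  ultimately show ?thesis by simp
qed

lemma regular_lang_all_letters: "regular_lang {w. \<forall>a\<in>set w. P a}"
proof -
  define \<delta> where "\<delta> q a = (q \<and> P a)" for q a
  have run: "foldl \<delta> q w = (q \<and> (\<forall>a\<in>set w. P a))" for q w
    by (induction w arbitrary: q) (auto simp: \<delta>_def)
  have "regular_lang {w. foldl \<delta> True w \<in> {True}}"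
    by (rule regular_langI[of UNIV]) auto
  then show ?thesis using run by simp
qed


section \<open>Relations recognized in a regular numeration system\<close>

text \<open>A \<open>d\<close>-ary relation on \<open>\<nat>\<close> is \<^emph>\<open>recognizable\<close> if the words over \<open>d\<close>-tuples of digits whose
  \<open>d\<close> tracks are representations (of equal length, possibly zero-padded) of a tuple in the relation
  form a regular language.\<close>

definition track :: "nat list list \<Rightarrow> nat \<Rightarrow> nat list" where
  "track W t = map (\<lambda>a. a ! t) W"

definition tuple_word :: "nat list set \<Rightarrow> nat \<Rightarrow> nat list list \<Rightarrow> bool" where
  "tuple_word L d W \<longleftrightarrow> (\<forall>a\<in>set W. length a = d) \<and> (\<forall>t<d. track W t \<in> L)"

definition track_vals :: "nat list set \<Rightarrow> nat \<Rightarrow> nat list list \<Rightarrow> nat list" where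
  "track_vals L d W = map (\<lambda>t. val L (track W t)) [0..<d]"

definition tuple_lang :: "nat list set \<Rightarrow> nat \<Rightarrow> (nat list \<Rightarrow> bool) \<Rightarrow> nat list list set" where
  "tuple_lang L d R = {W. tuple_word L d W \<and> R (track_vals L d W)}"

definition recognizable :: "nat list set \<Rightarrow> nat \<Rightarrow> (nat list \<Rightarrow> bool) \<Rightarrow> bool" where
  "recognizable L d R \<longleftrightarrow> regular_lang (tuple_lang L d R)"

definition snoc_track :: "nat list list \<Rightarrow> nat list \<Rightarrow> nat list list" where
  "snoc_track V y = map (\<lambda>(a, b). a @ [b]) (zip V y)"

lemma length_track_vals [simp]: "length (track_vals L d W) = d"
  by (simp add: track_vals_def)

lemma nth_track_vals [simp]: "t < d \<Longrightarrow> track_vals L d W ! t = val L (track W t)"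
  by (simp add: track_vals_def)

lemma track_append [simp]: "track (V @ W) t = track V t @ track W t"
  by (simp add: track_def)

lemma track_zeros [simp]: "t < d \<Longrightarrow> track (replicate j (replicate d 0)) t = replicate j 0"
  by (simp add: track_def)

lemma length_track [simp]: "length (track W t) = length W"
  by (simp add: track_def)

lemma snoc_track_Cons [simp]: "snoc_track (a # V) (b # y) = (a @ [b]) # snoc_track V y"
  by (simp add: snoc_track_def)

lemma snoc_track_Nil [simp]: "snoc_track [] y = []"
  by (simp add: snoc_track_def)

lemma snoc_track_append:
  "length V = length y \<Longrightarrow> snoc_track (V @ W) (y @ u) = snoc_track V y @ snoc_track W u"
  by (simp add: snoc_track_def)

lemma track_snoc_track:
  assumes "\<forall>a\<in>set V. length a = d" "length y = length V"
  shows "t < d \<Longrightarrow> track (snoc_track V y) t = track V t" and "track (snoc_track V y) d = y"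
  using assms unfolding track_def snoc_track_def
  by (auto simp: list_eq_iff_nth_eq nth_append dest: nth_mem)

lemma foldl_guess_last_track:
  "foldl (\<lambda>S a. {\<delta> q (a @ [b]) | q b. q \<in> S \<and> b \<in> D}) S W =
    {foldl \<delta> q (snoc_track W u) | q u. q \<in> S \<and> set u \<subseteq> D \<and> length u = length W}"
proof (induction W arbitrary: S)
  case Nil
  then show ?case by auto
next
  case (Cons a W)
  let ?\<Delta> = "\<lambda>S a. {\<delta> q (a @ [b]) | q b. q \<in> S \<and> b \<in> D}"
  show ?case
  proof (intro set_eqI iffI)
    fix s assume "s \<in> foldl ?\<Delta> S (a # W)"
    then obtain q b u where "q \<in> S" "b \<in> D" "set u \<subseteq> D" "length u = length W"
      "s = foldl \<delta> (\<delta> q (a @ [b])) (snoc_track W u)"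
      using Cons.IH by auto
    then show "s \<in> {foldl \<delta> q (snoc_track (a # W) u) | q u.
        q \<in> S \<and> set u \<subseteq> D \<and> length u = length (a # W)}"
      by (intro CollectI exI[of _ q] exI[of _ "b # u"]) auto
  next
    fix s assume "s \<in> {foldl \<delta> q (snoc_track (a # W) u) | q u.
        q \<in> S \<and> set u \<subseteq> D \<and> length u = length (a # W)}"
    then obtain q b u where "q \<in> S" "b \<in> D" "set u \<subseteq> D" "length u = length W"
      "s = foldl \<delta> (\<delta> q (a @ [b])) (snoc_track W u)"
      by (auto simp: length_Suc_conv)
    moreover have "\<delta> q (a @ [b]) \<in> ?\<Delta> S a"
      using \<open>q \<in> S\<close> \<open>b \<in> D\<close> by auto
    ultimately show "s \<in> foldl ?\<Delta> S (a # W)"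
      using Cons.IH by auto
  qed
qed

locale regular_numeration = numeration_system +
  assumes regular_lang_L: "regular_lang L"
    and regular_lang_add_rel: "regular_lang (add_rel L)"

lemma regular_ns_imp_regular_numeration: "regular_ns L D \<Longrightarrow> regular_numeration L D"
  by (simp add: regular_ns_def regular_numeration_def regular_numeration_axioms_def
      numeration_system_def)

context regular_numeration
begin

lemma regular_tuple_words: "regular_lang {W. tuple_word L d W}"
proof -
  have "regular_lang {W. (\<forall>a\<in>set W. length a = d) \<and> (\<forall>t<m. track W t \<in> L)}" for m
  proof (induction m)
    case 0
    then show ?case using regular_lang_all_letters[of "\<lambda>a. length a = d"] by simp
  next
    case (Suc m)
    have "{W. (\<forall>a\<in>set W. length a = d) \<and> (\<forall>t<Suc m. track W t \<in> L)} =
      {W. (\<forall>a\<in>set W. length a = d) \<and> (\<forall>t<m. track W t \<in> L)} \<inter> {W. map (\<lambda>a. a ! m) W \<in> L}"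
      by (auto simp: track_def less_Suc_eq)
    then show ?case
      using regular_lang_Int[OF Suc regular_lang_map_vimage[OF regular_lang_L]] by simp
  qed
  then show ?thesis unfolding tuple_word_def .
qed

lemma recognizable_cong:
  assumes "recognizable L d R" "\<And>ns. length ns = d \<Longrightarrow> R ns = R' ns"
  shows "recognizable L d R'"
proof -
  have "tuple_lang L d R = tuple_lang L d R'" unfolding tuple_lang_def using assms(2) by auto
  then show ?thesis using assms(1) unfolding recognizable_def by simp
qed

lemma recognizable_True: "recognizable L d (\<lambda>_. True)"
  unfolding recognizable_def tuple_lang_def using regular_tuple_words by simp

lemma recognizable_conj:
  "recognizable L d R1 \<Longrightarrow> recognizable L d R2 \<Longrightarrow> recognizable L d (\<lambda>ns. R1 ns \<and> R2 ns)"
proof -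
  have "tuple_lang L d (\<lambda>ns. R1 ns \<and> R2 ns) = tuple_lang L d R1 \<inter> tuple_lang L d R2"
    unfolding tuple_lang_def by auto
  then show "recognizable L d R1 \<Longrightarrow> recognizable L d R2 \<Longrightarrow> ?thesis"
    unfolding recognizable_def using regular_lang_Int by simp
qed

lemma recognizable_not: "recognizable L d R \<Longrightarrow> recognizable L d (\<lambda>ns. \<not> R ns)"
proof -
  have "tuple_lang L d (\<lambda>ns. \<not> R ns) = {W. tuple_word L d W} - tuple_lang L d R"
    unfolding tuple_lang_def by auto
  then show "recognizable L d R \<Longrightarrow> ?thesis"
    unfolding recognizable_def using regular_lang_Diff[OF regular_tuple_words] by simp
qed

lemma recognizable_disj:
  "recognizable L d R1 \<Longrightarrow> recognizable L d R2 \<Longrightarrow> recognizable L d (\<lambda>ns. R1 ns \<or> R2 ns)"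
  using recognizable_not[OF recognizable_conj[OF recognizable_not recognizable_not]] by simp

lemma recognizable_imp:
  "recognizable L d R1 \<Longrightarrow> recognizable L d R2 \<Longrightarrow> recognizable L d (\<lambda>ns. R1 ns \<longrightarrow> R2 ns)"
  using recognizable_disj[OF recognizable_not] by simp

lemma recognizable_ball_list:
  "(\<And>c. c \<in> set cs \<Longrightarrow> recognizable L d (R c)) \<Longrightarrow> recognizable L d (\<lambda>ns. \<forall>c\<in>set cs. R c ns)"
  by (induction cs) (simp_all add: recognizable_True recognizable_conj)

text \<open>Selecting and reordering coordinates is a letter-to-letter morphism on tuple words.\<close>
lemma recognizable_reindex:
  assumes "recognizable L d R" "length \<sigma> = d" "\<forall>t\<in>set \<sigma>. t < d'"
  shows "recognizable L d' (\<lambda>ns. R (map (\<lambda>t. ns ! t) \<sigma>))"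
proof -
  define h where "h a = map (\<lambda>t. a ! t) \<sigma>" for a :: "nat list"
  have track_h: "track (map h W) i = track W (\<sigma> ! i)" if "i < d" for W i
    using that assms(2) unfolding track_def h_def by auto
  have vals_h: "track_vals L d (map h W) = map (\<lambda>t. track_vals L d' W ! t) \<sigma>" for W
    using assms(2,3) track_h by (intro nth_equalityI) auto
  have "tuple_word L d' W \<Longrightarrow> tuple_word L d (map h W)" for W
    using assms(2,3) track_h unfolding tuple_word_def by (auto simp: h_def)
  then have "tuple_lang L d' (\<lambda>ns. R (map (\<lambda>t. ns ! t) \<sigma>)) =
      {W. tuple_word L d' W} \<inter> {W. map h W \<in> tuple_lang L d R}"
    unfolding tuple_lang_def by (auto simp: vals_h)
  then show ?thesis
    using regular_lang_Int[OF regular_tuple_words regular_lang_map_vimage] assms(1)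
    unfolding recognizable_def by simp
qed

lemma tuple_word_snoc_track:
  assumes "\<forall>a\<in>set V. length a = d" "length y = length V"
  shows "tuple_word L (Suc d) (snoc_track V y) \<longleftrightarrow> tuple_word L d V \<and> y \<in> L"
proof -
  have "\<forall>a\<in>set (snoc_track V y). length a = Suc d"
    using assms(1) unfolding snoc_track_def by (auto dest: set_zip_leftD)
  then show ?thesis
    unfolding tuple_word_def using assms track_snoc_track[OF assms] by (auto simp: less_Suc_eq)
qed

lemma track_vals_snoc_track:
  assumes "\<forall>a\<in>set V. length a = d" "length y = length V"
  shows "track_vals L (Suc d) (snoc_track V y) = track_vals L d V @ [val L y]"
  using track_snoc_track[OF assms] by (intro nth_equalityI) (auto simp: nth_append less_Suc_eq)

lemma tuple_word_zeros_append:
  "tuple_word L d W \<Longrightarrow> tuple_word L d (replicate j (replicate d 0) @ W)"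
  unfolding tuple_word_def by auto

lemma track_vals_zeros_append:
  "tuple_word L d W \<Longrightarrow> track_vals L d (replicate j (replicate d 0) @ W) = track_vals L d W"
  unfolding tuple_word_def by (intro nth_equalityI) auto

text \<open>A guessed last track may stick out to the left of the others, which are then zero-padded.\<close>
lemma ex_last_coordinate_iff:
  assumes W: "tuple_word L d W"
  shows "(\<exists>m. R (track_vals L d W @ [m])) \<longleftrightarrow>
    (\<exists>z u. set z \<subseteq> D \<and> set u \<subseteq> D \<and> length u = length W \<and>
      snoc_track (replicate (length z) (replicate d 0) @ W) (z @ u) \<in> tuple_lang L (Suc d) R)"
    (is "_ \<longleftrightarrow> (\<exists>z u. ?guess z u)")
proof
  assume "\<exists>m. R (track_vals L d W @ [m])"
  then obtain m where m: "R (track_vals L d W @ [m])" by blast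
  define y where "y = replicate (length W) 0 @ rep L m"
  define z where "z = take (length (rep L m)) y"
  define u where "u = drop (length (rep L m)) y"
  define V where "V = replicate (length z) (replicate d 0) @ W"
  have y_split: "y = z @ u"
    unfolding z_def u_def by simp
  have y: "length u = length W" "y \<in> L"
    unfolding u_def y_def by (simp_all add: rep_in_lang)
  have V: "tuple_word L d V" unfolding V_def using W by (rule tuple_word_zeros_append)
  then have lenV: "\<forall>a\<in>set V. length a = d" "length y = length V"
    unfolding tuple_word_def by blast (simp add: V_def y_split y(1))
  have "snoc_track V y \<in> tuple_lang L (Suc d) R"
    using V y(2) m tuple_word_snoc_track[OF lenV] track_vals_snoc_track[OF lenV]
      track_vals_zeros_append[OF W]
    unfolding tuple_lang_def V_def by (simp add: y_def)
  moreover have "set z \<subseteq> D" "set u \<subseteq> D"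
    using y_split set_subset_digits[OF y(2)] by auto
  ultimately have "?guess z u"
    using y_split y(1) unfolding V_def by simp
  then show "\<exists>z u. ?guess z u" by blast
next
  assume "\<exists>z u. ?guess z u"
  then obtain z u where zu: "?guess z u" by blast
  define V where "V = replicate (length z) (replicate d 0) @ W"
  have "tuple_word L d V" unfolding V_def using W by (rule tuple_word_zeros_append)
  then have lenV: "\<forall>a\<in>set V. length a = d" "length (z @ u) = length V"
    unfolding tuple_word_def by blast (simp add: V_def zu)
  have "R (track_vals L d V @ [val L (z @ u)])"
    using zu track_vals_snoc_track[OF lenV] unfolding tuple_lang_def V_def by auto
  then show "\<exists>m. R (track_vals L d W @ [m])"
    unfolding V_def track_vals_zeros_append[OF W] by auto
qed

text \<open>Projection is a subset construction guessing the last track.\<close>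
lemma recognizable_ex:
  assumes "recognizable L (Suc d) R"
  shows "recognizable L d (\<lambda>ns. \<exists>m. R (ns @ [m]))"
proof -
  obtain Q q0 \<delta> F where A: "finite (Q::nat set)" "q0 \<in> Q" "\<forall>q\<in>Q. \<forall>a. \<delta> q a \<in> Q"
    "tuple_lang L (Suc d) R = {w. foldl \<delta> q0 w \<in> F}"
    using regular_langE[OF assms[unfolded recognizable_def]] by metis
  define Z where "Z z = snoc_track (replicate (length z) (replicate d 0)) z" for z
  define S0 where "S0 = {foldl \<delta> q0 (Z z) | z. set z \<subseteq> D}"
  define \<Delta> where "\<Delta> S a = {\<delta> q (a @ [b]) | q b. q \<in> S \<and> b \<in> D}" for S a
  have run: "foldl \<Delta> S W =
      {foldl \<delta> q (snoc_track W u) | q u. q \<in> S \<and> set u \<subseteq> D \<and> length u = length W}" for S W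
    unfolding \<Delta>_def[abs_def] by (rule foldl_guess_last_track)
  have "(\<exists>m. R (track_vals L d W @ [m])) \<longleftrightarrow> foldl \<Delta> S0 W \<inter> F \<noteq> {}" if "tuple_word L d W" for W
  proof -
    have "foldl \<Delta> S0 W \<inter> F \<noteq> {} \<longleftrightarrow> (\<exists>z u. set z \<subseteq> D \<and> set u \<subseteq> D \<and> length u = length W \<and>
        foldl \<delta> (foldl \<delta> q0 (Z z)) (snoc_track W u) \<in> F)"
      unfolding run S0_def by blast
    also have "\<dots> \<longleftrightarrow> (\<exists>m. R (track_vals L d W @ [m]))"
      unfolding ex_last_coordinate_iff[OF that] A(4) Z_def by (simp add: snoc_track_append)
    finally show ?thesis by simp
  qed
  then have "tuple_lang L d (\<lambda>ns. \<exists>m. R (ns @ [m])) =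
      {W. tuple_word L d W} \<inter> {W. foldl \<Delta> S0 W \<in> {S. S \<inter> F \<noteq> {}}}"
    unfolding tuple_lang_def by auto
  moreover have "regular_lang {W. foldl \<Delta> S0 W \<in> {S. S \<inter> F \<noteq> {}}}"
  proof (rule regular_langI[of "Pow Q"])
    show "finite (Pow Q)" using A(1) by simp
    show "S0 \<in> Pow Q" unfolding S0_def using foldl_in_states[OF A(2,3)] by auto
    show "\<forall>q\<in>Pow Q. \<forall>a. \<Delta> q a \<in> Pow Q" unfolding \<Delta>_def using A(3) by auto
  qed
  ultimately show ?thesis
    unfolding recognizable_def using regular_lang_Int[OF regular_tuple_words] by simp
qed

lemma recognizable_ex_cong:
  assumes "recognizable L (Suc d) R" "\<And>ns. length ns = d \<Longrightarrow> (\<exists>m. R (ns @ [m])) = R' ns"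
  shows "recognizable L d R'"
  using recognizable_cong[OF recognizable_ex[OF assms(1)]] assms(2) by blast

lemma recognizable_ex_list:
  assumes "recognizable L (d + m) R"
  shows "recognizable L d (\<lambda>ns. \<exists>ms. length ms = m \<and> R (ns @ ms))"
  using assms
proof (induction m arbitrary: R)
  case 0
  then show ?case by simp
next
  case (Suc m)
  have "recognizable L (d + m) (\<lambda>ns. \<exists>x. R (ns @ [x]))"
    using recognizable_ex[of "d + m" R] Suc.prems by simp
  then have "recognizable L d (\<lambda>ns. \<exists>ms. length ms = m \<and> (\<exists>x. R ((ns @ ms) @ [x])))"
    by (rule Suc.IH)
  moreover have "(\<exists>ms. length ms = m \<and> (\<exists>x. R ((ns @ ms) @ [x]))) \<longleftrightarrow>
      (\<exists>ms. length ms = Suc m \<and> R (ns @ ms))" for ns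
  proof
    assume "\<exists>ms. length ms = m \<and> (\<exists>x. R ((ns @ ms) @ [x]))"
    then obtain ms x where "length ms = m" "R ((ns @ ms) @ [x])" by blast
    then show "\<exists>ms. length ms = Suc m \<and> R (ns @ ms)" by (intro exI[of _ "ms @ [x]"]) auto
  next
    assume "\<exists>ms. length ms = Suc m \<and> R (ns @ ms)"
    then obtain ms x where "length ms = m" "R (ns @ (ms @ [x]))"
      by (auto simp: length_Suc_conv_rev)
    then show "\<exists>ms. length ms = m \<and> (\<exists>x. R ((ns @ ms) @ [x]))" by auto
  qed
  ultimately show ?case by simp
qed

end


lemma map_fst_conv: "map fst (conv x ys) = x"
  unfolding conv_def by (simp add: comp_def map_nth)

lemma map_nth_snd_conv:
  "t < length ys \<Longrightarrow> length (ys ! t) = length x \<Longrightarrow> map (\<lambda>p. snd p ! t) (conv x ys) = ys ! t"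
proof -
  assume "t < length ys" "length (ys ! t) = length x"
  have "map (\<lambda>p. snd p ! t) (conv x ys) = map (\<lambda>i. ys ! t ! i) [0..<length x]"
    unfolding conv_def using \<open>t < length ys\<close> by simp
  also have "\<dots> = ys ! t"
    using map_nth[of "ys ! t"] \<open>length (ys ! t) = length x\<close> by simp
  finally show ?thesis .
qed

lemma conv_inject:
  assumes "conv x ys = conv x' ys'" "length ys = length ys'"
    and "\<forall>y\<in>set ys. length y = length x" "\<forall>y\<in>set ys'. length y = length x'"
  shows "x = x' \<and> ys = ys'"
proof
  show x: "x = x'"
    using map_fst_conv[of x ys] unfolding assms(1) map_fst_conv by simp
  have "ys ! t = ys' ! t" if "t < length ys" for t
  proof -
    have "length (ys ! t) = length x" "length (ys' ! t) = length x'"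
      using assms(2-4) that by (simp_all add: nth_mem)
    then show ?thesis
      using map_nth_snd_conv[of t ys x] map_nth_snd_conv[of t ys' x'] assms(1,2) that by simp
  qed
  then show "ys = ys'"
    using assms(2) by (simp add: list_eq_iff_nth_eq)
qed

lemma drop_one_eq_map_nth: "length a = Suc c \<Longrightarrow> drop 1 a = map (\<lambda>t. a ! Suc t) [0..<c]"
  by (intro nth_equalityI) auto

lemma conv_tracks:
  assumes "\<forall>a\<in>set W. length a = Suc c"
  shows "map (\<lambda>a. (a ! 0, drop 1 a)) W = conv (track W 0) (map (\<lambda>t. track W (Suc t)) [0..<c])"
proof (rule nth_equalityI)
  fix i assume "i < length (map (\<lambda>a. (a ! 0, drop 1 a)) W)"
  then have "i < length W" "length (W ! i) = Suc c"
    using assms by auto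
  then show "map (\<lambda>a. (a ! 0, drop 1 a)) W ! i = conv (track W 0) (map (\<lambda>t. track W (Suc t)) [0..<c]) ! i"
    using drop_one_eq_map_nth[of "W ! i" c] by (simp add: conv_def track_def)
qed (simp add: conv_def)

context regular_numeration
begin

lemma recognizable_add: "recognizable L 3 (\<lambda>ns. ns ! 0 + ns ! 1 = ns ! 2)"
proof -
  define h where "h a = (a ! 0, a ! 1, a ! 2)" for a :: "nat list"
  have "tuple_lang L 3 (\<lambda>ns. ns ! 0 + ns ! 1 = ns ! 2) =
      {W. tuple_word L 3 W} \<inter> {W. map h W \<in> add_rel L}"
  proof (intro set_eqI iffI)
    fix W assume "W \<in> tuple_lang L 3 (\<lambda>ns. ns ! 0 + ns ! 1 = ns ! 2)"
    then have W: "tuple_word L 3 W"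
      and sum: "val L (track W 0) + val L (track W 1) = val L (track W 2)"
      unfolding tuple_lang_def by auto
    have "map h W = zip (track W 0) (zip (track W 1) (track W 2))"
      unfolding h_def track_def by (induction W) auto
    moreover have "track W 0 \<in> L" "track W 1 \<in> L" "track W 2 \<in> L"
      using W unfolding tuple_word_def by auto
    ultimately have "map h W \<in> add_rel L"
      unfolding add_rel_def using sum
      by (intro CollectI exI[of _ "track W 0"] exI[of _ "track W 1"] exI[of _ "track W 2"]) simp
    then show "W \<in> {W. tuple_word L 3 W} \<inter> {W. map h W \<in> add_rel L}"
      using W by auto
  next
    fix W assume W: "W \<in> {W. tuple_word L 3 W} \<inter> {W. map h W \<in> add_rel L}"
    then obtain x y z where xyz: "map h W = zip x (zip y z)" "length x = length y"
      "length y = length z" "val L x + val L y = val L z"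
      unfolding add_rel_def by auto
    have "map fst (map h W) = x" "map (fst \<circ> snd) (map h W) = y" "map (snd \<circ> snd) (map h W) = z"
      unfolding xyz using xyz(2,3) by (auto simp: map_fst_zip map_snd_zip simp flip: map_map)
    then have "track W 0 = x" "track W 1 = y" "track W 2 = z"
      unfolding h_def track_def by auto
    then have "track_vals L 3 W ! 0 + track_vals L 3 W ! 1 = track_vals L 3 W ! 2"
      using xyz(4) by simp
    then show "W \<in> tuple_lang L 3 (\<lambda>ns. ns ! 0 + ns ! 1 = ns ! 2)"
      using W unfolding tuple_lang_def by blast
  qed
  then show ?thesis
    using regular_lang_Int[OF regular_tuple_words regular_lang_map_vimage[OF regular_lang_add_rel]]
    unfolding recognizable_def by simp
qed

lemma recognizable_synchronized:
  assumes "synchronized L c s"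
  shows "recognizable L (Suc c) (\<lambda>ns. s (ns ! 0) = drop 1 ns)"
proof -
  define SL where "SL = {conv x ys | x ys. x \<in> L \<and> length ys = c \<and>
        (\<forall>y\<in>set ys. y \<in> L \<and> length y = length x) \<and> s (val L x) = map (val L) ys}"
  have regular_SL: "regular_lang SL"
    using assms unfolding synchronized_def SL_def by (rule conjunct2)
  define h where "h a = (a ! 0, drop 1 a)" for a :: "nat list"
  define tracks where "tracks W = map (\<lambda>t. track W (Suc t)) [0..<c]" for W
  have h_tracks: "map h W = conv (track W 0) (tracks W)" if "tuple_word L (Suc c) W" for W
    using that conv_tracks unfolding tuple_word_def h_def[abs_def] tracks_def by blast
  have vals_tracks: "drop 1 (track_vals L (Suc c) W) = map (val L) (tracks W)" for W
    unfolding tracks_def by (auto simp: list_eq_iff_nth_eq)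
  have "tuple_lang L (Suc c) (\<lambda>ns. s (ns ! 0) = drop 1 ns) =
      {W. tuple_word L (Suc c) W} \<inter> {W. map h W \<in> SL}"
  proof (intro set_eqI iffI)
    fix W assume "W \<in> tuple_lang L (Suc c) (\<lambda>ns. s (ns ! 0) = drop 1 ns)"
    then have W: "tuple_word L (Suc c) W" and "s (val L (track W 0)) = map (val L) (tracks W)"
      unfolding tuple_lang_def vals_tracks[symmetric] by auto
    moreover have "\<forall>y\<in>set (tracks W). y \<in> L \<and> length y = length (track W 0)"
      using W unfolding tuple_word_def tracks_def by auto
    moreover have "map h W = conv (track W 0) (tracks W)" "track W 0 \<in> L"
      using W h_tracks unfolding tuple_word_def by simp_all
    ultimately have "map h W \<in> SL"
      unfolding SL_def by (intro CollectI exI[of _ "track W 0"] exI[of _ "tracks W"])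
        (simp add: tracks_def)
    then show "W \<in> {W. tuple_word L (Suc c) W} \<inter> {W. map h W \<in> SL}"
      using W by blast
  next
    fix W assume "W \<in> {W. tuple_word L (Suc c) W} \<inter> {W. map h W \<in> SL}"
    then have W: "tuple_word L (Suc c) W" and "map h W \<in> SL" by auto
    then obtain x ys where xys: "map h W = conv x ys" "length ys = c"
        "\<forall>y\<in>set ys. length y = length x" "s (val L x) = map (val L) ys"
      unfolding SL_def by blast
    have "conv x ys = conv (track W 0) (tracks W)"
      using xys(1) h_tracks[OF W] by simp
    moreover have "\<forall>y\<in>set (tracks W). length y = length (track W 0)"
      unfolding tracks_def by simp
    ultimately have x: "x = track W 0" and "ys = tracks W"
      using conv_inject xys(2,3) by (simp_all add: tracks_def)
    then show "W \<in> tuple_lang L (Suc c) (\<lambda>ns. s (ns ! 0) = drop 1 ns)"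
      unfolding tuple_lang_def using W xys(4) x vals_tracks[of W] by auto
  qed
  then show ?thesis
    unfolding recognizable_def
    using regular_lang_Int[OF regular_tuple_words regular_lang_map_vimage[OF regular_SL]] by simp
qed

text \<open>Two copies of the output automaton run in parallel, one on each track.\<close>
lemma recognizable_automatic:
  assumes "automatic L f"
  shows "recognizable L 2 (\<lambda>ns. g (f (ns ! 0)) = g (f (ns ! 1)))"
proof -
  obtain Q q0 \<delta> \<tau> where A: "finite (Q::nat set)" "q0 \<in> Q" "\<forall>q\<in>Q. \<forall>a. \<delta> q a \<in> Q"
    "\<forall>w\<in>L. f (val L w) = \<tau> (foldl \<delta> q0 w)"
    using assms unfolding automatic_def by blast
  define \<delta>' where "\<delta>' pq a = (\<delta> (fst pq) (a ! 0), \<delta> (snd pq) (a ! (1::nat)))" for pq a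
  have run: "foldl \<delta>' (p, q) W = (foldl \<delta> p (track W 0), foldl \<delta> q (track W 1))" for p q W
    unfolding track_def by (induction W arbitrary: p q) (auto simp: \<delta>'_def)
  define F where "F = {pq. g (\<tau> (fst pq)) = g (\<tau> (snd pq))}"
  have "tuple_lang L 2 (\<lambda>ns. g (f (ns ! 0)) = g (f (ns ! 1))) =
      {W. tuple_word L 2 W} \<inter> {W. foldl \<delta>' (q0, q0) W \<in> F}"
    unfolding tuple_lang_def tuple_word_def F_def using A(4) run by auto
  moreover have "regular_lang {W. foldl \<delta>' (q0, q0) W \<in> F}"
    by (rule regular_langI[of "Q \<times> Q"]) (use A in \<open>auto simp: \<delta>'_def\<close>)
  ultimately show ?thesis
    unfolding recognizable_def using regular_lang_Int[OF regular_tuple_words] by simp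
qed

lemma recognizable_add_at:
  "a < d \<Longrightarrow> b < d \<Longrightarrow> c < d \<Longrightarrow> recognizable L d (\<lambda>ns. ns ! a + ns ! b = ns ! c)"
  using recognizable_reindex[OF recognizable_add, of "[a, b, c]" d] by simp

lemma recognizable_le_at:
  assumes "a < d" "b < d"
  shows "recognizable L d (\<lambda>ns. ns ! a \<le> ns ! b)"
proof (rule recognizable_ex_cong)
  show "recognizable L (Suc d) (\<lambda>zs. zs ! a + zs ! d = zs ! b)"
    using assms by (intro recognizable_add_at) auto
  show "(\<exists>m. (ns @ [m]) ! a + (ns @ [m]) ! d = (ns @ [m]) ! b) = (ns ! a \<le> ns ! b)"
    if "length ns = d" for ns :: "nat list"
    using assms that by (auto simp: nth_append le_iff_add) metis
qed

lemma recognizable_eq_at: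
  assumes "a < d" "b < d"
  shows "recognizable L d (\<lambda>ns. ns ! a = ns ! b)"
proof -
  have "recognizable L d (\<lambda>ns. ns ! a \<le> ns ! b \<and> ns ! b \<le> ns ! a)"
    using assms by (intro recognizable_conj recognizable_le_at)
  then show ?thesis by (rule recognizable_cong) auto
qed

lemma recognizable_less_at:
  "a < d \<Longrightarrow> b < d \<Longrightarrow> recognizable L d (\<lambda>ns. ns ! a < ns ! b)"
  using recognizable_not[OF recognizable_le_at, of b d a] by (rule recognizable_cong) auto

text \<open>Zero is the solution of \<open>m + m = m\<close>, and \<open>Suc c\<close> is the immediate successor of \<open>c\<close>.\<close>
lemma recognizable_eq_const_at:
  "a < d \<Longrightarrow> recognizable L d (\<lambda>ns. ns ! a = c)"
proof (induction c arbitrary: a d)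
  case 0
  then show ?case
    using recognizable_add_at[of a d a a] by (rule_tac recognizable_cong) auto
next
  case (Suc c)
  have "recognizable L (Suc (Suc d)) (\<lambda>zs. zs ! d < zs ! Suc d \<and> zs ! Suc d < zs ! a)"
    using Suc.prems by (intro recognizable_conj recognizable_less_at) auto
  then have "recognizable L (Suc d) (\<lambda>ys. \<exists>u. ys ! d < u \<and> u < ys ! a)"
    by (rule recognizable_ex_cong) (use Suc.prems in \<open>auto simp: nth_append\<close>)
  then have "recognizable L (Suc d)
      (\<lambda>ys. ys ! d = c \<and> ys ! d < ys ! a \<and> \<not> (\<exists>u. ys ! d < u \<and> u < ys ! a))"
    using Suc.prems by (intro recognizable_conj recognizable_not Suc.IH recognizable_less_at) auto
  then show ?case
  proof (rule recognizable_ex_cong)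
    have "(c < y \<and> \<not> (\<exists>u. c < u \<and> u < y)) \<longleftrightarrow> y = Suc c" for y :: nat
    proof
      assume "c < y \<and> \<not> (\<exists>u. c < u \<and> u < y)"
      then show "y = Suc c" using Suc_lessI[of c y] lessI[of c] by blast
    qed auto
    then show "(\<exists>m. (ns @ [m]) ! d = c \<and> (ns @ [m]) ! d < (ns @ [m]) ! a \<and>
        \<not> (\<exists>u. (ns @ [m]) ! d < u \<and> u < (ns @ [m]) ! a)) = (ns ! a = Suc c)"
      if "length ns = d" for ns :: "nat list"
      using that Suc.prems by (simp add: nth_append)
  qed
qed

lemma recognizable_automatic_at:
  "automatic L f \<Longrightarrow> a < d \<Longrightarrow> b < d \<Longrightarrow> recognizable L d (\<lambda>ns. g (f (ns ! a)) = g (f (ns ! b)))"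
  using recognizable_reindex[OF recognizable_automatic[of f g], of "[a, b]" d] by simp

lemma recognizable_synchronized_at:
  assumes "synchronized L c (\<lambda>n. map (\<lambda>t. P t n) [0..<c])" "t < c" "a < d" "b < d"
  shows "recognizable L d (\<lambda>ns. P t (ns ! a) = ns ! b)"
proof -
  have "recognizable L (d + c)
      (\<lambda>zs. map (\<lambda>t. P t (zs ! a)) [0..<c] = map (\<lambda>i. zs ! i) [d..<d + c])"
    using recognizable_reindex[OF recognizable_synchronized[OF assms(1)], of "a # [d..<d + c]" "d + c"]
      assms(3)
    by (rule_tac recognizable_cong) (auto simp: drop_map)
  then have "recognizable L (d + c)
      (\<lambda>zs. map (\<lambda>t. P t (zs ! a)) [0..<c] = map (\<lambda>i. zs ! i) [d..<d + c] \<and> zs ! (d + t) = zs ! b)"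
    using assms by (intro recognizable_conj recognizable_eq_at) auto
  then show ?thesis
  proof (rule recognizable_cong[OF recognizable_ex_list])
    fix ns :: "nat list" assume len: "length ns = d"
    have ms: "map (\<lambda>i. (ns @ ms) ! i) [d..<d + c] = ms" if "length ms = c" for ms
      using that len by (intro nth_equalityI) (auto simp: nth_append)
    show "(\<exists>ms. length ms = c \<and>
        map (\<lambda>t. P t ((ns @ ms) ! a)) [0..<c] = map (\<lambda>i. (ns @ ms) ! i) [d..<d + c] \<and>
        (ns @ ms) ! (d + t) = (ns @ ms) ! b) = (P t (ns ! a) = ns ! b)"
    proof
      assume "\<exists>ms. length ms = c \<and>
        map (\<lambda>t. P t ((ns @ ms) ! a)) [0..<c] = map (\<lambda>i. (ns @ ms) ! i) [d..<d + c] \<and>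
        (ns @ ms) ! (d + t) = (ns @ ms) ! b"
      then obtain ms where "length ms = c" "map (\<lambda>t. P t (ns ! a)) [0..<c] = ms" "ms ! t = ns ! b"
        using ms len assms by (auto simp: nth_append)
      moreover have "map (\<lambda>t. P t (ns ! a)) [0..<c] ! t = P t (ns ! a)"
        using assms(2) by simp
      ultimately show "P t (ns ! a) = ns ! b" by simp
    next
      assume "P t (ns ! a) = ns ! b"
      then show "\<exists>ms. length ms = c \<and>
        map (\<lambda>t. P t ((ns @ ms) ! a)) [0..<c] = map (\<lambda>i. (ns @ ms) ! i) [d..<d + c] \<and>
        (ns @ ms) ! (d + t) = (ns @ ms) ! b"
        using ms len assms by (intro exI[of _ "map (\<lambda>t. P t (ns ! a)) [0..<c]"]) (auto simp: nth_append)
    qed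
  qed
qed

end


section \<open>Counting accepted completions by a linear representation\<close>

lemma mword_Nil: "mword r \<mu> [] = (\<lambda>i j. if i = j then 1 else 0)"
  by (simp add: mword_def)

lemma mword_Cons: "mword r \<mu> (a # w) = mmul r (\<mu> a) (mword r \<mu> w)"
  by (simp add: mword_def)

lemma mmul_assoc: "mmul r (mmul r A B) C i j = mmul r A (\<lambda>i j. mmul r B C i j) i j"
proof -
  have "mmul r (mmul r A B) C i j = (\<Sum>m<r. \<Sum>l<r. A i l * B l m * C m j)"
    unfolding mmul_def by (simp add: sum_distrib_right)
  also have "\<dots> = (\<Sum>l<r. \<Sum>m<r. A i l * B l m * C m j)"
    by (rule sum.swap)
  also have "\<dots> = mmul r A (\<lambda>i j. mmul r B C i j) i j"
    unfolding mmul_def by (simp add: sum_distrib_left mult.assoc)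
  finally show ?thesis .
qed

lemma mword_append:
  "i < r \<Longrightarrow> mword r \<mu> (u @ v) i j = mmul r (mword r \<mu> u) (mword r \<mu> v) i j"
proof (induction u arbitrary: i j)
  case Nil
  have "mmul r (\<lambda>i j. if i = j then 1 else 0) (mword r \<mu> v) i j =
      (\<Sum>l<r. if i = l then mword r \<mu> v l j else 0)"
    unfolding mmul_def by (intro sum.cong) auto
  also have "\<dots> = mword r \<mu> v i j"
    using Nil by (simp add: sum.delta)
  finally show ?case by (simp add: mword_Nil)
next
  case (Cons a u)
  have "mword r \<mu> ((a # u) @ v) i j = (\<Sum>l<r. \<mu> a i l * mword r \<mu> (u @ v) l j)"
    by (simp add: mword_Cons mmul_def)
  also have "\<dots> = (\<Sum>l<r. \<mu> a i l * mmul r (mword r \<mu> u) (mword r \<mu> v) l j)"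
    using Cons.IH by (intro sum.cong) auto
  also have "\<dots> = mmul r (mword r \<mu> (a # u)) (mword r \<mu> v) i j"
    unfolding mword_Cons mmul_assoc by (simp add: mmul_def)
  finally show ?case .
qed

lemma sum_comp_eq_sum_card_fibres:
  fixes g :: "'b \<Rightarrow> int"
  assumes "finite D" "finite S" "\<forall>b\<in>D. h b \<in> S"
  shows "(\<Sum>b\<in>D. g (h b)) = (\<Sum>l\<in>S. int (card {b\<in>D. h b = l}) * g l)"
proof -
  have "(\<Sum>b\<in>D. g (h b)) = (\<Sum>l\<in>S. \<Sum>b\<in>{b \<in> D. h b = l}. g (h b))"
  proof -
    have "h ` D \<subseteq> S" using assms(3) by auto
    from sum.group[OF assms(1,2) this, of "\<lambda>b. g (h b)"] show ?thesis by simp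
  qed
  then show ?thesis by simp
qed

lemma card_lists_Cons:
  assumes "finite D"
  shows "card {u. set u \<subseteq> D \<and> length u = Suc m \<and> P u} =
    (\<Sum>b\<in>D. card {u. set u \<subseteq> D \<and> length u = m \<and> P (b # u)})"
proof -
  have eq: "{u. set u \<subseteq> D \<and> length u = Suc m \<and> P u} =
      (\<Union>b\<in>D. (Cons b) ` {u. set u \<subseteq> D \<and> length u = m \<and> P (b # u)})"
    by (auto simp: length_Suc_conv)
  have "finite {u. set u \<subseteq> D \<and> length u = m \<and> P (b # u)}" for b
    by (rule finite_subset[OF _ finite_lists_length_eq[OF assms, of m]]) auto
  then show ?thesis unfolding eq
    by (subst card_UN_disjoint) (use assms in \<open>auto simp: card_image\<close>)
qed

definition tracks2 :: "nat list \<Rightarrow> nat list \<Rightarrow> nat list list" where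
  "tracks2 v u = map (\<lambda>(a, b). [a, b]) (zip v u)"

lemma tracks2_Cons [simp]: "tracks2 (a # v) (b # u) = [a, b] # tracks2 v u"
  by (simp add: tracks2_def)

lemma tracks2_Nil [simp]: "tracks2 [] u = []"
  by (simp add: tracks2_def)

lemma track_tracks2:
  "length u = length v \<Longrightarrow> track (tracks2 v u) 0 = v \<and> track (tracks2 v u) 1 = u"
  by (auto intro: nth_equalityI simp: track_def tracks2_def)

text \<open>For a DFA on 2-tuples with states in \<open>{..<r}\<close>, the entry \<open>(p, q)\<close> of the matrix product along
  \<open>v\<close> counts the second tracks \<open>u\<close> over \<open>D\<close> that lead from \<open>p\<close> to \<open>q\<close> when read together with \<open>v\<close>.\<close>

context
  fixes Q :: "nat set" and \<delta> :: "nat \<Rightarrow> nat list \<Rightarrow> nat" and D :: "nat set" and r :: nat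
  assumes finite_D: "finite D" and closed: "\<forall>q\<in>Q. \<forall>a. \<delta> q a \<in> Q" and Q_bound: "Q \<subseteq> {..<r}"
begin

definition completions :: "nat \<Rightarrow> nat list \<Rightarrow> nat \<Rightarrow> nat list set" where
  "completions p v q = {u. set u \<subseteq> D \<and> length u = length v \<and> foldl \<delta> p (tracks2 v u) = q}"

definition transition_count :: "nat \<Rightarrow> nat \<Rightarrow> nat \<Rightarrow> int" where
  "transition_count a p q = (if p \<in> Q then int (card {b\<in>D. \<delta> p [a, b] = q}) else 0)"

lemma mword_transition_count:
  "p \<in> Q \<Longrightarrow> mword r transition_count v p q = int (card (completions p v q))"
proof (induction v arbitrary: p)
  case Nil
  have "completions p [] q = (if p = q then {[]} else {})"
    unfolding completions_def by auto
  then show ?case by (simp add: mword_Nil)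
next
  case (Cons a v)
  have "mword r transition_count (a # v) p q =
      (\<Sum>l<r. transition_count a p l * mword r transition_count v l q)"
    by (simp add: mword_Cons mmul_def)
  also have "\<dots> = (\<Sum>l<r. int (card {b\<in>D. \<delta> p [a, b] = l}) * int (card (completions l v q)))"
  proof (rule sum.cong)
    fix l
    show "transition_count a p l * mword r transition_count v l q =
        int (card {b\<in>D. \<delta> p [a, b] = l}) * int (card (completions l v q))"
    proof (cases "l \<in> Q")
      case True
      then show ?thesis using Cons.IH[OF True] Cons.prems by (simp add: transition_count_def[of a p l])
    next
      case False
      then have "{b\<in>D. \<delta> p [a, b] = l} = {}" using closed Cons.prems by auto
      then have "card {b\<in>D. \<delta> p [a, b] = l} = 0" by (simp only: card.empty)
      then show ?thesis using Cons.prems by (simp add: transition_count_def[of a p l])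
    qed
  qed simp
  also have "\<dots> = (\<Sum>b\<in>D. int (card (completions (\<delta> p [a, b]) v q)))"
    using Cons.prems closed Q_bound
    by (intro sum_comp_eq_sum_card_fibres[symmetric] finite_D) auto
  also have "\<dots> = int (card (completions p (a # v) q))"
    unfolding completions_def
    using card_lists_Cons[OF finite_D, of "length v" "\<lambda>u. foldl \<delta> p (tracks2 (a # v) u) = q"]
    by simp
  finally show ?case .
qed

lemma sum_mword_transition_count:
  assumes "F \<subseteq> Q" "p \<in> Q"
  shows "(\<Sum>j<r. mword r transition_count v p j * (if j \<in> F then 1 else 0)) =
    int (card {u. set u \<subseteq> D \<and> length u = length v \<and> foldl \<delta> p (tracks2 v u) \<in> F})"
proof -
  have F: "F \<subseteq> {..<r}" "finite F"
    using assms(1) Q_bound by (auto intro: finite_subset[OF _ finite_lessThan])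
  have "(\<Sum>j<r. mword r transition_count v p j * (if j \<in> F then 1 else 0)) =
      (\<Sum>j\<in>{..<r} \<inter> F. mword r transition_count v p j)"
    unfolding sum.inter_restrict[OF finite_lessThan] by (intro sum.cong) auto
  also have "{..<r} \<inter> F = F"
    using F(1) by blast
  also have "(\<Sum>j\<in>F. mword r transition_count v p j) = (\<Sum>j\<in>F. int (card (completions p v j)))"
    using mword_transition_count[OF assms(2)] by simp
  also have "\<dots> = int (card (\<Union>j\<in>F. completions p v j))"
  proof -
    have "finite (completions p v j)" for j
      unfolding completions_def
      by (rule finite_subset[OF _ finite_lists_length_eq[OF finite_D, of "length v"]]) auto
    then show ?thesis
      using F(2) by (subst card_UN_disjoint) (auto simp: completions_def)
  qed
  also have "(\<Union>j\<in>F. completions p v j) =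
      {u. set u \<subseteq> D \<and> length u = length v \<and> foldl \<delta> p (tracks2 v u) \<in> F}"
    unfolding completions_def by auto
  finally show ?thesis .
qed

end


section \<open>Pumping\<close>

definition pump :: "nat \<Rightarrow> nat \<Rightarrow> nat \<Rightarrow> 'a list \<Rightarrow> 'a list" where
  "pump t1 t2 p xs = take t1 xs @ concat (replicate p (take (t2 - t1) (drop t1 xs))) @ drop t2 xs"

lemma map_pump: "map f (pump t1 t2 p xs) = pump t1 t2 p (map f xs)"
  by (simp add: pump_def take_map drop_map map_concat)

lemma length_pump:
  "t1 \<le> t2 \<Longrightarrow> t2 \<le> length xs \<Longrightarrow> length (pump t1 t2 p xs) = t1 + p * (t2 - t1) + (length xs - t2)"
  by (simp add: pump_def length_concat sum_list_replicate)

lemma foldl_concat_replicate: "foldl \<delta> q ys = q \<Longrightarrow> foldl \<delta> q (concat (replicate p ys)) = q"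
  by (induction p) auto

lemma foldl_pump:
  assumes "t1 \<le> t2" "foldl \<delta> q (take t1 xs) = foldl \<delta> q (take t2 xs)"
  shows "foldl \<delta> q (pump t1 t2 p xs) = foldl \<delta> q xs"
proof -
  define X where "X = take t1 xs"
  define Y where "Y = take (t2 - t1) (drop t1 xs)"
  define Z where "Z = drop t2 xs"
  have "take t2 xs = X @ Y"
    unfolding X_def Y_def using assms(1) by (metis le_add_diff_inverse take_add)
  then have xs: "xs = X @ Y @ Z" and loop: "foldl \<delta> (foldl \<delta> q X) Y = foldl \<delta> q X"
    unfolding Z_def using assms(2) by (metis append_assoc append_take_drop_id, simp add: X_def)
  have "foldl \<delta> q (pump t1 t2 p xs) = foldl \<delta> (foldl \<delta> q X) Z"
    unfolding pump_def X_def[symmetric] Y_def[symmetric] Z_def[symmetric]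
    by (simp add: foldl_concat_replicate[OF loop])
  also have "\<dots> = foldl \<delta> q xs"
    by (subst xs) (simp add: loop)
  finally show ?thesis .
qed

lemma pump_zeros_append:
  assumes "t1 \<le> t2" "t2 \<le> j"
  shows "pump t1 t2 p (replicate j a @ w) = replicate (t1 + p * (t2 - t1) + (j - t2)) a @ w"
proof -
  have "concat (replicate p (replicate m a)) = replicate (p * m) a" for m
    by (induction p) (auto simp: replicate_add)
  then show ?thesis
    using assms unfolding pump_def by (simp add: replicate_add[symmetric])
qed

lemma hd_pump: "0 < t1 \<Longrightarrow> xs \<noteq> [] \<Longrightarrow> pump t1 t2 p xs \<noteq> [] \<and> hd (pump t1 t2 p xs) = hd xs"
  by (cases xs; cases t1) (auto simp: pump_def)

lemma foldl_take_repeat: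
  assumes "finite Q" "q0 \<in> Q" "\<forall>q\<in>Q. \<forall>a. \<delta> q a \<in> Q"
  obtains a b where "0 < a" "a < b" "b \<le> Suc (card Q)"
    "foldl \<delta> q0 (take a W) = foldl \<delta> q0 (take b W)"
proof -
  define st where "st t = foldl \<delta> q0 (take t W)" for t
  have "st ` {1..Suc (card Q)} \<subseteq> Q"
    unfolding st_def using foldl_in_states[OF assms(2,3)] by auto
  then have "\<not> inj_on st {1..Suc (card Q)}"
    using card_inj_on_le[OF _ _ assms(1)] by fastforce
  then obtain t1 t2 where "t1 \<in> {1..Suc (card Q)}" "t2 \<in> {1..Suc (card Q)}" "t1 < t2" "st t1 = st t2"
    unfolding inj_on_def by (metis linorder_neqE_nat)
  then show ?thesis using that[of t1 t2] unfolding st_def by simp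
qed

context regular_numeration
begin

lemma tuple_word_tracks2:
  "length u = length v \<Longrightarrow> tuple_word L 2 (tracks2 v u) \<longleftrightarrow> v \<in> L \<and> u \<in> L"
  using track_tracks2[of u v] unfolding tuple_word_def
  by (auto simp: tracks2_def less_Suc_eq numeral_eq_Suc)

lemma track_vals_tracks2:
  "length u = length v \<Longrightarrow> track_vals L 2 (tracks2 v u) = [val L v, val L u]"
  using track_tracks2[of u v] by (simp add: track_vals_def numeral_eq_Suc upt_rec)

lemma inj_val_pump:
  assumes "\<And>p. pump a b p u \<in> L" "u \<in> valid_words L" "u \<noteq> []" "0 < a" "a < b" "b \<le> length u"
  shows "inj (\<lambda>p. val L (pump a b p u))"
proof (rule injI)
  have valid: "pump a b p u \<in> valid_words L" for p
    using assms(1-4) hd_pump[of a u b p] unfolding valid_words_def by auto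
  fix p p' assume "val L (pump a b p u) = val L (pump a b p' u)"
  then have "radix_rank L (pump a b p u) = radix_rank L (pump a b p' u)"
    using val_zeros_append_valid[OF valid, of 0] by simp
  then have "length (pump a b p u) = length (pump a b p' u)"
    using inj_on_radix_rank valid unfolding inj_on_def by metis
  then have "a + p * (b - a) + (length u - b) = a + p' * (b - a) + (length u - b)"
    using assms(5,6) length_pump[of a b u] by (simp only: less_imp_le)
  then have "p * (b - a) = p' * (b - a)"
    by linarith
  then show "p = p'" using assms(5) by simp
qed

text \<open>If \<open>R\<close> is recognized by the DFA and has finite sections, a witness \<open>i\<close> with \<open>R [n, i]\<close> never
  needs more than \<open>card Q\<close> digits beyond those of \<open>n\<close>: otherwise the part of the run where the
  first track reads leading zeros could be pumped, producing infinitely many witnesses.\<close>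
lemma rep_length_bound:
  assumes lang: "tuple_lang L 2 R = {W. foldl \<delta> q0 W \<in> F}"
    and Q: "finite Q" "q0 \<in> Q" "\<forall>q\<in>Q. \<forall>a. \<delta> q a \<in> Q"
    and fin: "finite {i. R [n, i]}" and Rni: "R [n, i]"
  shows "length (rep L i) \<le> length (rep L n) + card Q"
proof (rule ccontr)
  assume long: "\<not> ?thesis"
  define j0 where "j0 = length (rep L i) - length (rep L n)"
  define v where "v = replicate j0 0 @ rep L n"
  define u where "u = rep L i"
  define W where "W = tracks2 v u"
  have len: "length u = length v" "Suc (card Q) \<le> j0" "j0 \<le> length v"
    unfolding u_def v_def j0_def using long by auto
  have "W \<in> tuple_lang L 2 R"
    using Rni tuple_word_tracks2[OF len(1)] track_vals_tracks2[OF len(1)]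
    unfolding tuple_lang_def W_def by (simp add: u_def v_def rep_in_lang)
  then have accepted: "foldl \<delta> q0 W \<in> F" using lang by simp
  obtain a b where ab: "0 < a" "a < b" "b \<le> Suc (card Q)"
    "foldl \<delta> q0 (take a W) = foldl \<delta> q0 (take b W)"
    using foldl_take_repeat[OF Q] by blast
  have "pump a b p W \<in> tuple_lang L 2 R" for p
    using lang foldl_pump[of a b \<delta> q0 W p] ab accepted by simp
  then have pumped: "tuple_word L 2 (pump a b p W)" "R (track_vals L 2 (pump a b p W))" for p
    unfolding tuple_lang_def by auto
  have tracks: "track (pump a b p W) 0 = pump a b p v" "track (pump a b p W) 1 = pump a b p u" for p
    unfolding track_def map_pump using track_tracks2[OF len(1)] unfolding W_def track_def by simp_all
  have "pump a b p v = replicate (a + p * (b - a) + (j0 - b)) 0 @ rep L n" for p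
    unfolding v_def using pump_zeros_append[of a b j0] ab len by simp
  then have "R [n, val L (pump a b p u)]" for p
    using pumped(2)[of p] tracks[of p] by (simp add: track_vals_def numeral_eq_Suc upt_rec)
  moreover have "inj (\<lambda>p. val L (pump a b p u))"
  proof (rule inj_val_pump)
    show "pump a b p u \<in> L" for p
      using pumped(1)[of p] unfolding tuple_word_def tracks(2)[symmetric] by simp
    show "u \<in> valid_words L" "u \<noteq> []"
      using rep_valid_rank[of i] len unfolding u_def by auto
  qed (use ab len in auto)
  ultimately have "infinite {i. R [n, i]}"
    by (metis (mono_tags, lifting) finite_imageD finite_subset image_subset_iff infinite_UNIV_nat
        mem_Collect_eq)
  then show False using fin by contradiction
qed

lemma accepted_tracks2_eq:
  assumes lang: "tuple_lang L 2 R = {W. foldl \<delta> q0 W \<in> F}" and "v \<in> L"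
  shows "{u. set u \<subseteq> D \<and> length u = length v \<and> foldl \<delta> q0 (tracks2 v u) \<in> F} =
    {u. u \<in> L \<and> length u = length v \<and> R [val L v, val L u]}"
proof -
  have "foldl \<delta> q0 (tracks2 v u) \<in> F \<longleftrightarrow> u \<in> L \<and> R [val L v, val L u]" if "length u = length v" for u
  proof -
    have "foldl \<delta> q0 (tracks2 v u) \<in> F \<longleftrightarrow>
        tuple_word L 2 (tracks2 v u) \<and> R (track_vals L 2 (tracks2 v u))"
      using lang unfolding tuple_lang_def by blast
    then show ?thesis
      using tuple_word_tracks2[OF that] track_vals_tracks2[OF that] \<open>v \<in> L\<close> by simp
  qed
  then show ?thesis using set_subset_digits by blast
qed

lemma card_witness_words:
  assumes lang: "tuple_lang L 2 R = {W. foldl \<delta> q0 W \<in> F}"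
    and Q: "finite Q" "q0 \<in> Q" "\<forall>q\<in>Q. \<forall>a. \<delta> q a \<in> Q" and fin: "finite {i. R [n, i]}"
  shows "card {u. u \<in> L \<and> length u = card Q + length (rep L n) \<and> R [n, val L u]} = card {i. R [n, i]}"
    (is "card ?U = _")
proof (rule bij_betw_same_card[of "val L"], rule bij_betw_imageI)
  show "inj_on (val L) ?U"
    using same_length_val_eq_imp_eq by (auto intro: inj_onI)
  have "i \<in> val L ` ?U" if "R [n, i]" for i
  proof -
    have "length (rep L i) \<le> card Q + length (rep L n)"
      using rep_length_bound[OF lang Q fin that] by simp
    then have "replicate (card Q + length (rep L n) - length (rep L i)) 0 @ rep L i \<in> ?U"
      using that by (simp add: rep_in_lang)
    then show ?thesis
      using val_zeros_append_rep by (metis (no_types, lifting) image_eqI)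
  qed
  then show "val L ` ?U = {i. R [n, i]}"
    by auto
qed

text \<open>The padding \<open>0\<^sup>N\<close>, \<open>N = card Q\<close>, that makes room for all witnesses \<open>i\<close> of \<open>R [n, i]\<close> is
  absorbed into the initial vector of the linear representation.\<close>
lemma recognizable_count_regular:
  assumes rec: "recognizable L 2 R" and fin: "\<And>n. finite {i. R [n, i]}"
  shows "regular_seq L (\<lambda>n. card {i. R [n, i]})"
proof -
  obtain Q q0 \<delta> F where A: "finite (Q::nat set)" "q0 \<in> Q" "\<forall>q\<in>Q. \<forall>a. \<delta> q a \<in> Q" "F \<subseteq> Q"
    "tuple_lang L 2 R = {w. foldl \<delta> q0 w \<in> F}"
    using regular_langE[OF rec[unfolded recognizable_def]] by metis
  define r where "r = Suc (Max Q)"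
  have Q_bound: "Q \<subseteq> {..<r}" unfolding r_def using A(1) by (auto simp: less_Suc_eq_le)
  define \<mu> where "\<mu> = transition_count Q \<delta> D"
  define \<alpha> where "\<alpha> i = mword r \<mu> (replicate (card Q) 0) q0 i" for i
  define \<gamma> :: "nat \<Rightarrow> int" where "\<gamma> j = (if j \<in> F then 1 else 0)" for j
  have "int (card {i. R [n, i]}) = (\<Sum>i<r. \<Sum>j<r. \<alpha> i * mword r \<mu> (rep L n) i j * \<gamma> j)" for n
  proof -
    define v where "v = replicate (card Q) 0 @ rep L n"
    have "(\<Sum>i<r. \<Sum>j<r. \<alpha> i * mword r \<mu> (rep L n) i j * \<gamma> j) =
        (\<Sum>j<r. (\<Sum>i<r. \<alpha> i * mword r \<mu> (rep L n) i j) * \<gamma> j)"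
      by (subst sum.swap) (simp add: sum_distrib_right)
    also have "\<dots> = (\<Sum>j<r. mword r \<mu> v q0 j * \<gamma> j)"
      unfolding v_def \<alpha>_def using mword_append A(2) Q_bound by (auto simp: mmul_def)
    also have "\<dots> = int (card {u. set u \<subseteq> D \<and> length u = length v \<and> foldl \<delta> q0 (tracks2 v u) \<in> F})"
      unfolding \<gamma>_def \<mu>_def
      by (rule sum_mword_transition_count[OF finite_digits A(3) Q_bound A(4,2)])
    also have "\<dots> = int (card {i. R [n, i]})"
      using accepted_tracks2_eq[OF A(5), of v] card_witness_words[OF A(5) A(1-3) fin, of n]
      by (simp add: v_def rep_in_lang)
    finally show ?thesis by simp
  qed
  then show ?thesis unfolding regular_seq_def by blast
qed

end


section \<open>Factors and \<open>k\<close>-abelian equivalence\<close>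

text \<open>An occurrence of \<open>w\<close> is either a prefix or is preceded by some letter \<open>a\<close>, i.e. it extends
  to an occurrence of \<open>a # w\<close> one position earlier.\<close>
lemma occ_eq_sum_occ_Cons:
  assumes "finite S" "set u \<subseteq> S"
  shows "occ u w = (\<Sum>a\<in>S. occ u (a # w)) + (if take (length w) u = w then 1 else 0)"
proof -
  define J where "J = {i. Suc i + length w \<le> length u \<and> take (length w) (drop (Suc i) u) = w}"
  have finite_J: "finite J" unfolding J_def by (rule finite_subset[of _ "{..length u}"]) auto
  have occ_Cons: "{i. i + length (a # w) \<le> length u \<and> take (length (a # w)) (drop i u) = a # w} =
      {i\<in>J. u ! i = a}" for a
  proof -
    have "drop i u = u ! i # drop (Suc i) u" if "Suc i + length w \<le> length u" for i
      using that by (simp add: Cons_nth_drop_Suc)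
    then show ?thesis unfolding J_def by force
  qed
  have "(\<Sum>a\<in>S. occ u (a # w)) = card (\<Union>a\<in>S. {i\<in>J. u ! i = a})"
    unfolding occ_def occ_Cons using assms(1) finite_J by (subst card_UN_disjoint) auto
  also have "(\<Union>a\<in>S. {i\<in>J. u ! i = a}) = J"
    using assms(2) nth_mem[of _ u] by (fastforce simp: J_def)
  finally have sum_J: "(\<Sum>a\<in>S. occ u (a # w)) = card J" .
  have occurrences: "{i. i + length w \<le> length u \<and> take (length w) (drop i u) = w} =
      Suc ` J \<union> (if take (length w) u = w then {0} else {})"
  proof (intro set_eqI iffI)
    fix i assume "i \<in> {i. i + length w \<le> length u \<and> take (length w) (drop i u) = w}"
    then show "i \<in> Suc ` J \<union> (if take (length w) u = w then {0} else {})"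
      unfolding J_def by (cases i) auto
  next
    fix i assume "i \<in> Suc ` J \<union> (if take (length w) u = w then {0} else {})"
    then show "i \<in> {i. i + length w \<le> length u \<and> take (length w) (drop i u) = w}"
      unfolding J_def by (auto split: if_splits) (metis length_take min.absorb_iff2)
  qed
  have "occ u w = card J + (if take (length w) u = w then 1 else 0)"
    unfolding occ_def occurrences using finite_J by (auto simp: card_image)
  then show ?thesis using sum_J by simp
qed

lemma kab_equiv_imp_take_eq:
  assumes "kab_equiv k u v" "k \<ge> 1" "length u = length v"
  shows "take (k - 1) u = take (k - 1) v"
proof -
  define S where "S = set u \<union> set v"
  have S: "finite S" "set u \<subseteq> S" "set v \<subseteq> S" unfolding S_def by auto
  define w where "w = take (k - 1) u"
  have "length w \<le> k - 1" unfolding w_def by simp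
  then have "occ u (a # w) = occ v (a # w)" "occ u w = occ v w" for a
    using assms(1,2) unfolding kab_equiv_def by simp_all
  then have "(if take (length w) u = w then 1 else 0 :: nat) = (if take (length w) v = w then 1 else 0)"
    using occ_eq_sum_occ_Cons[OF S(1,2), of w] occ_eq_sum_occ_Cons[OF S(1,3), of w] by simp
  moreover have "take (length w) u = w"
    unfolding w_def by (simp add: min_def)
  ultimately have "take (length w) v = w"
    by (simp split: if_splits)
  moreover have "take (length w) v = take (k - 1) v"
    unfolding w_def using assms(3) by (simp add: min_def)
  ultimately show ?thesis
    unfolding w_def by simp
qed

lemma occ_eq_shorter_words:
  assumes prefix: "take (k - 1) u = take (k - 1) v"
    and blocks: "\<And>w. length w = k \<Longrightarrow> occ u w = occ v w"
    and "length w \<le> k"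
  shows "occ u w = occ v w"
  using \<open>length w \<le> k\<close>
proof (induction "k - length w" arbitrary: w rule: less_induct)
  case less
  define S where "S = set u \<union> set v"
  have S: "finite S" "set u \<subseteq> S" "set v \<subseteq> S" unfolding S_def by auto
  show ?case
  proof (cases "length w = k")
    case True
    then show ?thesis using blocks by simp
  next
    case False
    then have short: "length w \<le> k - 1" using less.prems by simp
    have "occ u (a # w) = occ v (a # w)" for a
      using less.hyps[of "a # w"] less.prems False by simp
    moreover have "take (length w) u = take (length w) v"
    proof -
      have "take (length w) u = take (length w) (take (k - 1) u)"
        using short by (simp add: min_def)
      also have "\<dots> = take (length w) v"
        using prefix short by (simp add: min_def)
      finally show ?thesis .
    qed
    ultimately show ?thesis
      using occ_eq_sum_occ_Cons[OF S(1,2), of w] occ_eq_sum_occ_Cons[OF S(1,3), of w] by simp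
  qed
qed

lemma kab_equiv_iff_take_eq_and_occ_eq:
  assumes "k \<ge> 1" "length u = length v"
  shows "kab_equiv k u v \<longleftrightarrow>
    take (k - 1) u = take (k - 1) v \<and> (\<forall>w. length w = k \<longrightarrow> occ u w = occ v w)"
  using kab_equiv_imp_take_eq[OF _ assms] occ_eq_shorter_words[of k u v]
  unfolding kab_equiv_def by auto

lemma length_factor [simp]: "length (factor x i n) = n"
  by (simp add: factor_def)

lemma take_factor: "take m (factor x i n) = factor x i (min m n)"
  by (simp add: factor_def take_map min_def)

lemma take_drop_factor: "p + m \<le> n \<Longrightarrow> take m (drop p (factor x i n)) = factor x (i + p) m"
  unfolding factor_def by (simp add: drop_map take_map add.assoc)

lemma length_factors: "w \<in> factors x k \<Longrightarrow> length w = k"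
  unfolding factors_def by auto

lemma finite_factors: "finite A \<Longrightarrow> \<forall>n. x n \<in> A \<Longrightarrow> finite (factors x n)"
  by (rule finite_subset[OF _ finite_lists_length_eq[of A n]]) (auto simp: factors_def factor_def)

lemma block_code_in_factors: "block_code k x i \<in> factors x k"
  unfolding block_code_def factors_def by auto

lemma prefix_count_not_factor: "w \<notin> factors x k \<Longrightarrow> prefix_count (block_code k x) w m = 0"
  unfolding prefix_count_def using block_code_in_factors[of k x] by auto

lemma prefix_count_add:
  "prefix_count y w (i + m) = prefix_count y w i + card {p. p < m \<and> y (i + p) = w}"
proof -
  have "{q. q < i + m \<and> y q = w} = {q. q < i \<and> y q = w} \<union> (\<lambda>p. i + p) ` {p. p < m \<and> y (i + p) = w}"
    by (auto simp: image_iff) (metis add_diff_inverse_nat add_less_imp_less_left)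
  moreover have "card ((\<lambda>p. i + p) ` {p. p < m \<and> y (i + p) = w}) = card {p. p < m \<and> y (i + p) = w}"
    by (rule card_image) (auto simp: inj_on_def)
  moreover have "card ({q. q < i \<and> y q = w} \<union> (\<lambda>p. i + p) ` {p. p < m \<and> y (i + p) = w}) =
      card {q. q < i \<and> y q = w} + card ((\<lambda>p. i + p) ` {p. p < m \<and> y (i + p) = w})"
    by (rule card_Un_disjoint) auto
  ultimately show ?thesis
    unfolding prefix_count_def by simp
qed

text \<open>Occurrences of a length-\<open>k\<close> word in a factor of length \<open>n\<close> are occurrences of a letter in a
  factor of length \<open>n - (k - 1)\<close> of the block code.\<close>
lemma prefix_count_block_code_factor:
  assumes "length w = k" "k \<ge> 1"
  shows "prefix_count (block_code k x) w (i + (n - (k - 1))) =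
    prefix_count (block_code k x) w i + occ (factor x i n) w"
proof -
  have "{p. p + length w \<le> length (factor x i n) \<and> take (length w) (drop p (factor x i n)) = w} =
      {p. p < n - (k - 1) \<and> block_code k x (i + p) = w}"
    using assms take_drop_factor[of _ k n x i] unfolding block_code_def
    by (auto simp: less_diff_conv)
  then show ?thesis
    unfolding occ_def by (simp add: prefix_count_add)
qed

definition new_class_positions :: "nat \<Rightarrow> (nat \<Rightarrow> 'a) \<Rightarrow> nat \<Rightarrow> nat set" where
  "new_class_positions k x n = {i. \<forall>j<i. \<not> kab_equiv k (factor x i n) (factor x j n)}"

text \<open>Each \<open>k\<close>-abelian class of factors is represented by the position of its first occurrence.\<close>
lemma bij_betw_new_class_positions:
  "bij_betw (\<lambda>i. {v \<in> factors x n. kab_equiv k (factor x i n) v}) (new_class_positions k x n)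
    ((\<lambda>u. {v \<in> factors x n. kab_equiv k u v}) ` factors x n)"
proof -
  let ?f = "\<lambda>i. factor x i n"
  let ?cls = "\<lambda>u. {v \<in> factors x n. kab_equiv k u v}"
  have equiv: "kab_equiv k u u" "kab_equiv k u v \<Longrightarrow> kab_equiv k v u"
    "kab_equiv k u v \<Longrightarrow> kab_equiv k v w \<Longrightarrow> kab_equiv k u w" for u v w :: "'a list"
    by (auto simp: kab_equiv_def)
  have cls_eq: "kab_equiv k u v \<Longrightarrow> ?cls u = ?cls v" for u v
    using equiv by blast
  show ?thesis
    unfolding bij_betw_def
  proof
    show "inj_on (\<lambda>i. ?cls (?f i)) (new_class_positions k x n)"
    proof (rule inj_onI)
      fix i i' assume "i \<in> new_class_positions k x n" "i' \<in> new_class_positions k x n"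
        and "?cls (?f i) = ?cls (?f i')"
      moreover have "?f i \<in> ?cls (?f i)" unfolding factors_def using equiv(1) by auto
      ultimately show "i = i'"
        unfolding new_class_positions_def using equiv(2) by (metis (lifting) linorder_neqE_nat
            mem_Collect_eq)
    qed
    have "?cls (?f i0) \<in> (\<lambda>i. ?cls (?f i)) ` new_class_positions k x n" for i0
    proof -
      define i where "i = (LEAST i. kab_equiv k (?f i) (?f i0))"
      have i: "kab_equiv k (?f i) (?f i0)"
        unfolding i_def by (rule LeastI[of _ i0]) (rule equiv(1))
      have "i \<in> new_class_positions k x n"
        unfolding new_class_positions_def
      proof (intro CollectI allI impI notI)
        fix j assume "j < i" "kab_equiv k (?f i) (?f j)"
        then have "kab_equiv k (?f j) (?f i0)" using equiv(2,3) i by blast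
        then have "i \<le> j" unfolding i_def by (rule Least_le)
        then show False using \<open>j < i\<close> by simp
      qed
      then show ?thesis using cls_eq[OF i] by auto
    qed
    then show "(\<lambda>i. ?cls (?f i)) ` new_class_positions k x n = ?cls ` factors x n"
      unfolding factors_def by auto
  qed
qed

lemma kab_complexity_eq_card_new_class_positions:
  "kab_complexity k x n = card (new_class_positions k x n)"
  unfolding kab_complexity_def by (rule bij_betw_same_card[OF bij_betw_new_class_positions, symmetric])

lemma finite_new_class_positions:
  "finite A \<Longrightarrow> \<forall>n. x n \<in> A \<Longrightarrow> finite (new_class_positions k x n)"
  using bij_betw_finite[OF bij_betw_new_class_positions] finite_factors by blast


text \<open>With \<open>B\<close> the block code, \<open>P t\<close> the prefix counts of its \<open>t\<close>-th letter and \<open>K = k - 1\<close>, this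
  expresses that the length-\<open>n\<close> factors at \<open>i\<close> and \<open>j\<close> are \<open>k\<close>-abelian equivalent (see
  \<open>kab_factor_rel_block_code_iff\<close>); the counts are compared without subtraction.\<close>
definition kab_factor_rel ::
  "(nat \<Rightarrow> 'b list) \<Rightarrow> (nat \<Rightarrow> nat \<Rightarrow> nat) \<Rightarrow> nat \<Rightarrow> nat \<Rightarrow> nat \<Rightarrow> nat \<Rightarrow> nat \<Rightarrow> bool" where
  "kab_factor_rel B P c K n i j \<longleftrightarrow> take (min n K) (B i) = take (min n K) (B j) \<and>
     (\<forall>t<c. P t (i + (n - K)) + P t j = P t (j + (n - K)) + P t i)"

context regular_numeration
begin

text \<open>The term is flattened by one existentially quantified coordinate per subterm:
  \<open>m = n - K\<close>, \<open>s = K\<close>, \<open>a\<^sub>1 = i + m\<close>, \<open>a\<^sub>2 = j + m\<close>, four values of \<open>P t\<close> and their common sum.\<close>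
lemma recognizable_prefix_count_increments:
  assumes sync: "synchronized L c (\<lambda>n. map (\<lambda>t. P t n) [0..<c])" and "t < c"
  shows "recognizable L 3
    (\<lambda>ns. P t (ns ! 1 + (ns ! 0 - K)) + P t (ns ! 2) = P t (ns ! 2 + (ns ! 0 - K)) + P t (ns ! 1))"
proof -
  let ?C = "\<lambda>zs::nat list. zs ! 4 = K \<and> (zs ! 4 + zs ! 3 = zs ! 0 \<or> zs ! 0 < zs ! 4 \<and> zs ! 3 = 0) \<and>
     zs ! 1 + zs ! 3 = zs ! 5 \<and> zs ! 2 + zs ! 3 = zs ! 6 \<and>
     P t (zs ! 5) = zs ! 7 \<and> P t (zs ! 2) = zs ! 8 \<and> P t (zs ! 6) = zs ! 9 \<and> P t (zs ! 1) = zs ! 10 \<and>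
     zs ! 7 + zs ! 8 = zs ! 11 \<and> zs ! 9 + zs ! 10 = zs ! 11"
  have "recognizable L (3 + 9) ?C"
    by (intro recognizable_conj recognizable_disj recognizable_eq_const_at recognizable_add_at
        recognizable_less_at recognizable_synchronized_at[OF sync \<open>t < c\<close>]) auto
  then show ?thesis
  proof (rule recognizable_cong[OF recognizable_ex_list])
    fix ns :: "nat list" assume "length ns = 3"
    then obtain n i j where ns: "ns = [n, i, j]"
      by (auto simp: numeral_3_eq_3 length_Suc_conv)
    show "(\<exists>ms. length ms = 9 \<and> ?C (ns @ ms)) =
      (P t (ns ! 1 + (ns ! 0 - K)) + P t (ns ! 2) = P t (ns ! 2 + (ns ! 0 - K)) + P t (ns ! 1))"
    proof
      assume "\<exists>ms. length ms = 9 \<and> ?C (ns @ ms)"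
      then obtain ms where ms: "length ms = 9" "?C (ns @ ms)" by blast
      then obtain m s a1 a2 p1 p2 p3 p4 q where "ms = [m, s, a1, a2, p1, p2, p3, p4, q]"
        by (auto simp: numeral_eq_Suc length_Suc_conv)
      then have "s = K" "s + m = n \<or> n < s \<and> m = 0" "i + m = a1" "j + m = a2"
        "P t a1 = p1" "P t j = p2" "P t a2 = p3" "P t i = p4" "p1 + p2 = q" "p3 + p4 = q"
        using ms(2) unfolding ns by (auto simp: numeral_eq_Suc)
      then show "P t (ns ! 1 + (ns ! 0 - K)) + P t (ns ! 2) = P t (ns ! 2 + (ns ! 0 - K)) + P t (ns ! 1)"
        unfolding ns by auto
    next
      assume increments: "P t (ns ! 1 + (ns ! 0 - K)) + P t (ns ! 2) = P t (ns ! 2 + (ns ! 0 - K)) + P t (ns ! 1)"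
      let ?ms = "[n - K, K, i + (n - K), j + (n - K), P t (i + (n - K)), P t j,
          P t (j + (n - K)), P t i, P t (i + (n - K)) + P t j]"
      have "?C (ns @ ?ms)"
        using increments unfolding ns by (simp add: numeral_eq_Suc) linarith
      moreover have "length ?ms = 9" by simp
      ultimately show "\<exists>ms. length ms = 9 \<and> ?C (ns @ ms)" by blast
    qed
  qed
qed

lemma recognizable_kab_factor_rel:
  assumes auto: "automatic L B" and sync: "synchronized L c (\<lambda>n. map (\<lambda>t. P t n) [0..<c])"
  shows "recognizable L 3 (\<lambda>ns. kab_factor_rel B P c K (ns ! 0) (ns ! 1) (ns ! 2))"
proof -
  have "recognizable L 3 (\<lambda>ns. K \<le> ns ! 0)"
  proof (rule recognizable_ex_cong)
    show "recognizable L (Suc 3) (\<lambda>zs. zs ! 3 = K \<and> zs ! 3 \<le> zs ! 0)"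
      by (intro recognizable_conj recognizable_eq_const_at recognizable_le_at) auto
    show "(\<exists>m. (ns @ [m]) ! 3 = K \<and> (ns @ [m]) ! 3 \<le> (ns @ [m]) ! 0) = (K \<le> ns ! 0)"
      if "length ns = 3" for ns :: "nat list"
      using that by (auto simp: nth_append)
  qed
  then have "recognizable L 3 (\<lambda>ns.
      (\<forall>d\<in>set [0..<K]. ns ! 0 = d \<longrightarrow> take d (B (ns ! 1)) = take d (B (ns ! 2))) \<and>
      (K \<le> ns ! 0 \<longrightarrow> take K (B (ns ! 1)) = take K (B (ns ! 2))) \<and>
      (\<forall>t\<in>set [0..<c].
        P t (ns ! 1 + (ns ! 0 - K)) + P t (ns ! 2) = P t (ns ! 2 + (ns ! 0 - K)) + P t (ns ! 1)))"
    by (intro recognizable_conj recognizable_ball_list recognizable_imp recognizable_eq_const_at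
        recognizable_automatic_at[OF auto] recognizable_prefix_count_increments[OF sync]) auto
  then show ?thesis
    by (rule recognizable_cong) (auto simp: kab_factor_rel_def min_def)
qed

lemma recognizable_new_kab_class:
  assumes "automatic L B" "synchronized L c (\<lambda>n. map (\<lambda>t. P t n) [0..<c])"
  shows "recognizable L 2 (\<lambda>ns. \<forall>j < ns ! 1. \<not> kab_factor_rel B P c K (ns ! 0) (ns ! 1) j)"
proof -
  have "recognizable L (Suc 2) (\<lambda>zs. zs ! 2 < zs ! 1 \<and> kab_factor_rel B P c K (zs ! 0) (zs ! 1) (zs ! 2))"
    using recognizable_conj[OF recognizable_less_at recognizable_kab_factor_rel[OF assms]] by simp
  then have "recognizable L 2 (\<lambda>ns. \<exists>j. j < ns ! 1 \<and> kab_factor_rel B P c K (ns ! 0) (ns ! 1) j)"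
    by (rule recognizable_ex_cong) (auto simp: nth_append)
  then have "recognizable L 2 (\<lambda>ns. \<not> (\<exists>j. j < ns ! 1 \<and> kab_factor_rel B P c K (ns ! 0) (ns ! 1) j))"
    by (rule recognizable_not)
  then show ?thesis
    by (rule recognizable_cong) auto
qed

end

lemma occ_factor_not_factor:
  "length w = k \<Longrightarrow> k \<ge> 1 \<Longrightarrow> w \<notin> factors x k \<Longrightarrow> occ (factor x i n) w = 0"
  using prefix_count_block_code_factor[of w k x i n] prefix_count_not_factor[of w x k] by simp

lemma occ_eq_enumerated_blocks_iff:
  fixes x :: "nat \<Rightarrow> 'a" and c :: nat
  assumes k: "k \<ge> 1" and e: "bij_betw e {0..<c} (factors x k)"
  shows "(\<forall>t<c. occ (factor x i n) (e t) = occ (factor x j n) (e t)) \<longleftrightarrow>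
    (\<forall>w. length w = k \<longrightarrow> occ (factor x i n) w = occ (factor x j n) w)"
proof
  assume all_t: "\<forall>t<c. occ (factor x i n) (e t) = occ (factor x j n) (e t)"
  show "\<forall>w. length w = k \<longrightarrow> occ (factor x i n) w = occ (factor x j n) w"
  proof (intro allI impI)
    fix w :: "'a list" assume "length w = k"
    show "occ (factor x i n) w = occ (factor x j n) w"
    proof (cases "w \<in> factors x k")
      case True
      then have "w \<in> e ` {0..<c}"
        using e unfolding bij_betw_def by simp
      then show ?thesis using all_t by auto
    next
      case False
      then show ?thesis
        using occ_factor_not_factor[OF \<open>length w = k\<close> k] by simp
    qed
  qed
next
  assume all_w: "\<forall>w. length w = k \<longrightarrow> occ (factor x i n) w = occ (factor x j n) w"
  have "length (e t) = k" if "t < c" for t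
    using that length_factors[OF bij_betw_apply[OF e]] by simp
  then show "\<forall>t<c. occ (factor x i n) (e t) = occ (factor x j n) (e t)"
    using all_w by simp
qed

lemma kab_factor_rel_block_code_iff:
  assumes k: "k \<ge> 1" and e: "bij_betw e {0..<c} (factors x k)"
  shows "kab_factor_rel (block_code k x) (\<lambda>t. prefix_count (block_code k x) (e t)) c (k - 1) n i j \<longleftrightarrow>
    kab_equiv k (factor x i n) (factor x j n)"
proof -
  let ?P = "\<lambda>t. prefix_count (block_code k x) (e t)"
  have "min (min n (k - 1)) k = min (k - 1) n"
    by (cases "n \<le> k - 1") (simp_all add: min_def)
  then have prefix: "take (min n (k - 1)) (block_code k x i) = take (k - 1) (factor x i n)" for i
    unfolding block_code_def take_factor by simp
  have "(\<forall>t<c. ?P t (i + (n - (k - 1))) + ?P t j = ?P t (j + (n - (k - 1))) + ?P t i) \<longleftrightarrow>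
      (\<forall>t<c. occ (factor x i n) (e t) = occ (factor x j n) (e t))"
    using prefix_count_block_code_factor[OF length_factors[OF bij_betw_apply[OF e]] k] by simp
  moreover have "kab_equiv k (factor x i n) (factor x j n) \<longleftrightarrow>
      take (k - 1) (factor x i n) = take (k - 1) (factor x j n) \<and>
      (\<forall>w. length w = k \<longrightarrow> occ (factor x i n) w = occ (factor x j n) w)"
    by (rule kab_equiv_iff_take_eq_and_occ_eq[OF k]) simp
  ultimately show ?thesis
    unfolding kab_factor_rel_def prefix occ_eq_enumerated_blocks_iff[OF k e] by simp
qed

theorem theorem40:
  fixes k :: nat and x :: "nat \<Rightarrow> 'a" and A :: "'a set"
    and L :: "nat list set" and D :: "nat set"
  assumes "k \<ge> 1"
    and "finite A" and "\<forall>n. x n \<in> A"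
    and "regular_ns L D"
    and "automatic L (block_code k x)"
    and "\<exists>e :: nat \<Rightarrow> 'a list.
           bij_betw e {0..<card (factors x k)} (factors x k) \<and>
           synchronized L (card (factors x k))
             (\<lambda>n. map (\<lambda>j. prefix_count (block_code k x) (e j) n) [0..<card (factors x k)])"
  shows "regular_seq L (kab_complexity k x)"
proof -
  interpret regular_numeration L D
    using assms(4) by (rule regular_ns_imp_regular_numeration)
  define c where "c = card (factors x k)"
  obtain e where e: "bij_betw e {0..<c} (factors x k)"
    and sync: "synchronized L c (\<lambda>n. map (\<lambda>t. prefix_count (block_code k x) (e t) n) [0..<c])"
    using assms(6) unfolding c_def by blast
  define R where "R ns \<longleftrightarrow> (\<forall>j < ns ! 1. \<not> kab_factor_rel (block_code k x)
      (\<lambda>t. prefix_count (block_code k x) (e t)) c (k - 1) (ns ! 0) (ns ! 1) j)" for ns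
  have R: "{i. R [n, i]} = new_class_positions k x n" for n
    unfolding R_def new_class_positions_def kab_factor_rel_block_code_iff[OF assms(1) e] by simp
  have "recognizable L 2 R"
    unfolding R_def using assms(5) sync by (rule recognizable_new_kab_class)
  then have "regular_seq L (\<lambda>n. card {i. R [n, i]})"
    by (rule recognizable_count_regular) (simp add: R finite_new_class_positions[OF assms(2,3)])
  then show ?thesis
    by (simp add: R kab_complexity_eq_card_new_class_positions[abs_def])
qed

end
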